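(* Let $\mathcal V$ be a complex topological vector space and $\mathcal D\subseteq\mathcal V_{\rm nc}$ a noncommutative set such that (P2) $UaU^*\in\mathcal D_n$ for all $a\in\mathcal D_n$ and unitary $U\in\mathbb C^{n\times n}$, and (P3) if $\begin{bmatrix}a&0\\0&c\end{bmatrix}\in\mathcal D_{n+m}$ with $a\in\mathcal V^{n\times n},c\in\mathcal V^{m\times m}$, then $a\in\mathcal D_n,c\in\mathcal D_m$. Then for any $n,m,k\in\mathbb N$, $a\in\mathcal D_n$, $c\in\mathcal D_m$, $b\in\mathcal V^{n\times m}$ and $Z\in\mathbb C^{k\times k}$, $\delta_{\mathcal D}(I_k\otimes a,I_k\otimes c)(Z\otimes b)=\delta_{\mathcal D}(a,c)(b)\,\|ZZ^*\|^{1/2}$.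
   Context: A noncommutative set is a family $\mathcal D=(\mathcal D_n)$, $\mathcal D_n\subseteq\mathcal V^{n\times n}$, closed under direct sums $\begin{bmatrix}a&0\\0&c\end{bmatrix}$. $I_k\otimes a$ is the $k$-fold block-diagonal direct sum of $a$, and $Z\otimes b\in\mathcal V^{kn\times km}$ is the block matrix $[Z_{ij}b]_{i,j}$. For $a\in\mathcal D_n,c\in\mathcal D_m,b\in\mathcal V^{n\times m}$, $\delta_{\mathcal D}(a,c)(b)=\big[\sup\{t\in[0,+\infty]\colon\begin{bmatrix}a&sb\\0&c\end{bmatrix}\in\mathcal D_{n+m}\ \forall s\in[0,t]\}\big]^{-1}\in[0,+\infty]$, with $1/0=+\infty$, $1/\infty=0$ and the convention $0\cdot(+\infty)=+\infty$. *)

theory Defs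
  imports "HOL-Analysis.Analysis"
begin

text \<open>Matrices of arbitrary size over a type are represented as functions
  nat \<Rightarrow> nat \<Rightarrow> 'a whose entries vanish outside the index block.\<close>

definition mats :: "nat \<Rightarrow> nat \<Rightarrow> (nat \<Rightarrow> nat \<Rightarrow> 'a::zero) set" where
  "mats n m = {a. \<forall>i j. (n \<le> i \<or> m \<le> j) \<longrightarrow> a i j = 0}"

definition ctvs :: "(complex \<Rightarrow> 'v::{ab_group_add,topological_space} \<Rightarrow> 'v) \<Rightarrow> bool" where
  "ctvs sc \<longleftrightarrow> vector_space sc
     \<and> continuous_on UNIV (\<lambda>p::'v \<times> 'v. fst p + snd p)
     \<and> continuous_on UNIV (\<lambda>p::complex \<times> 'v. sc (fst p) (snd p))"

definition upper :: "nat \<Rightarrow> nat \<Rightarrow> (nat \<Rightarrow> nat \<Rightarrow> 'a::zero) \<Rightarrow> (nat \<Rightarrow> nat \<Rightarrow> 'a)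
    \<Rightarrow> (nat \<Rightarrow> nat \<Rightarrow> 'a) \<Rightarrow> nat \<Rightarrow> nat \<Rightarrow> 'a" where
  "upper n m a b c = (\<lambda>i j.
     if i < n \<and> j < n then a i j
     else if i < n \<and> n \<le> j \<and> j < n + m then b i (j - n)
     else if n \<le> i \<and> i < n + m \<and> n \<le> j \<and> j < n + m then c (i - n) (j - n)
     else 0)"

definition dsum :: "nat \<Rightarrow> nat \<Rightarrow> (nat \<Rightarrow> nat \<Rightarrow> 'a::zero) \<Rightarrow> (nat \<Rightarrow> nat \<Rightarrow> 'a)
    \<Rightarrow> nat \<Rightarrow> nat \<Rightarrow> 'a" where
  "dsum n m a c = upper n m a (\<lambda>_ _. 0) c"

definition nc_set :: "(nat \<Rightarrow> (nat \<Rightarrow> nat \<Rightarrow> 'a::zero) set) \<Rightarrow> bool" where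
  "nc_set D \<longleftrightarrow> (\<forall>n. D n \<subseteq> mats n n) \<and>
     (\<forall>n m a c. 1 \<le> n \<longrightarrow> 1 \<le> m \<longrightarrow> a \<in> D n \<longrightarrow> c \<in> D m \<longrightarrow> dsum n m a c \<in> D (n + m))"

definition unitary_mat :: "nat \<Rightarrow> (nat \<Rightarrow> nat \<Rightarrow> complex) \<Rightarrow> bool" where
  "unitary_mat n U \<longleftrightarrow> (\<forall>i<n. \<forall>j<n. (\<Sum>l<n. U i l * cnj (U j l)) = (if i = j then 1 else 0))"

definition conj_by :: "(complex \<Rightarrow> 'v::ab_group_add \<Rightarrow> 'v) \<Rightarrow> nat \<Rightarrow> (nat \<Rightarrow> nat \<Rightarrow> complex) \<Rightarrow> (nat \<Rightarrow> nat \<Rightarrow> 'v)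
    \<Rightarrow> nat \<Rightarrow> nat \<Rightarrow> 'v" where
  "conj_by sc n U a = (\<lambda>i j. if i < n \<and> j < n then
      (\<Sum>p<n. \<Sum>q<n. sc (U i p * cnj (U j q)) (a p q)) else 0)"

definition P2 :: "(complex \<Rightarrow> 'v::ab_group_add \<Rightarrow> 'v) \<Rightarrow> (nat \<Rightarrow> (nat \<Rightarrow> nat \<Rightarrow> 'v) set) \<Rightarrow> bool" where
  "P2 sc D \<longleftrightarrow> (\<forall>n a U. 1 \<le> n \<longrightarrow> a \<in> D n \<longrightarrow> unitary_mat n U \<longrightarrow> conj_by sc n U a \<in> D n)"

definition P3 :: "(nat \<Rightarrow> (nat \<Rightarrow> nat \<Rightarrow> 'a::zero) set) \<Rightarrow> bool" where
  "P3 D \<longleftrightarrow> (\<forall>n m a c. 1 \<le> n \<longrightarrow> 1 \<le> m \<longrightarrow> a \<in> mats n n \<longrightarrow> c \<in> mats m m \<longrightarrow>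
      dsum n m a c \<in> D (n + m) \<longrightarrow> a \<in> D n \<and> c \<in> D m)"

text \<open>\<delta>_D(a,c)(b) with values in [0,\<infinity>] (ennreal); inverse 0 = \<infinity>, inverse \<infinity> = 0.\<close>
definition delta :: "(complex \<Rightarrow> 'v::ab_group_add \<Rightarrow> 'v) \<Rightarrow> (nat \<Rightarrow> (nat \<Rightarrow> nat \<Rightarrow> 'v) set) \<Rightarrow> nat \<Rightarrow> nat
    \<Rightarrow> (nat \<Rightarrow> nat \<Rightarrow> 'v) \<Rightarrow> (nat \<Rightarrow> nat \<Rightarrow> 'v) \<Rightarrow> (nat \<Rightarrow> nat \<Rightarrow> 'v) \<Rightarrow> ennreal" where
  "delta sc D n m a c b = inverse (Sup {t::ennreal. \<forall>s::real. 0 \<le> s \<and> ennreal s \<le> t \<longrightarrow>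
       upper n m a (\<lambda>i j. sc (complex_of_real s) (b i j)) c \<in> D (n + m)})"

definition emult :: "ennreal \<Rightarrow> ennreal \<Rightarrow> ennreal" where
  "emult x y = (if x = 0 \<and> y = top then top else x * y)"

definition kron_id :: "nat \<Rightarrow> nat \<Rightarrow> (nat \<Rightarrow> nat \<Rightarrow> 'a::zero) \<Rightarrow> nat \<Rightarrow> nat \<Rightarrow> 'a" where
  "kron_id k n a = (\<lambda>i j. if i < k * n \<and> j < k * n \<and> i div n = j div n
      then a (i mod n) (j mod n) else 0)"

definition kron :: "(complex \<Rightarrow> 'v::ab_group_add \<Rightarrow> 'v) \<Rightarrow> nat \<Rightarrow> nat \<Rightarrow> nat \<Rightarrow> (nat \<Rightarrow> nat \<Rightarrow> complex) \<Rightarrow> (nat \<Rightarrow> nat \<Rightarrow> 'v)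
    \<Rightarrow> nat \<Rightarrow> nat \<Rightarrow> 'v" where
  "kron sc k n m Z b = (\<lambda>i j. if i < k * n \<and> j < k * m
      then sc (Z (i div n) (j div m)) (b (i mod n) (j mod m)) else 0)"

definition cvnorm :: "nat \<Rightarrow> (nat \<Rightarrow> complex) \<Rightarrow> real" where
  "cvnorm k x = sqrt (\<Sum>i<k. (cmod (x i))\<^sup>2)"

definition mat_vec :: "nat \<Rightarrow> (nat \<Rightarrow> nat \<Rightarrow> complex) \<Rightarrow> (nat \<Rightarrow> complex) \<Rightarrow> nat \<Rightarrow> complex" where
  "mat_vec k M x = (\<lambda>i. \<Sum>j<k. M i j * x j)"

definition opnorm :: "nat \<Rightarrow> (nat \<Rightarrow> nat \<Rightarrow> complex) \<Rightarrow> real" where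
  "opnorm k M = Sup {cvnorm k (mat_vec k M x) | x. cvnorm k x \<le> 1}"

definition mult_adj :: "nat \<Rightarrow> (nat \<Rightarrow> nat \<Rightarrow> complex) \<Rightarrow> nat \<Rightarrow> nat \<Rightarrow> complex" where
  "mult_adj k Z = (\<lambda>i j. \<Sum>l<k. Z i l * cnj (Z j l))"

end

(*
  Take a singular value decomposition U^* Z W = diag(sigma) of Z.  Conjugating the block matrix
  [I_k (x) a, s (Z (x) b); 0, I_k (x) c] by the unitary that applies U^* (x) I_n and W^* (x) I_m and
  then regroups rows and columns copy by copy turns it into the direct sum of the k matrices
  [a, s sigma_i b; 0, c].  By (P2) and its converse for the inverse unitary, and by closure under
  direct sums together with (P3), the first matrix lies in D exactly when all of the latter do.
  Since the set of admissible scalings is an initial segment of [0, oo), this condition is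
  governed by the largest singular value sigma_max = ||Z Z^*||^(1/2), so the radius of
  admissible scalings is divided, and delta multiplied, by sigma_max.

  The singular value decomposition is obtained by maximising ||Z x|| on the unit sphere: at a
  maximiser w the first-order condition gives Z^* Z w = sigma^2 w, and unitaries with first
  columns w and Z w / sigma (built from Householder reflections) split off sigma.
*)

theory Submission
  imports Defs
begin

section \<open>Complex square matrices and unitaries\<close>

definition mat_mul :: "nat \<Rightarrow> (nat \<Rightarrow> nat \<Rightarrow> complex) \<Rightarrow> (nat \<Rightarrow> nat \<Rightarrow> complex)
    \<Rightarrow> nat \<Rightarrow> nat \<Rightarrow> complex" where
  "mat_mul k A B = (\<lambda>i j. \<Sum>l<k. A i l * B l j)"

definition mat_adjoint :: "(nat \<Rightarrow> nat \<Rightarrow> complex) \<Rightarrow> nat \<Rightarrow> nat \<Rightarrow> complex" where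
  "mat_adjoint A = (\<lambda>i j. cnj (A j i))"

definition diag_mat :: "nat \<Rightarrow> (nat \<Rightarrow> complex) \<Rightarrow> nat \<Rightarrow> nat \<Rightarrow> complex" where
  "diag_mat k d = (\<lambda>i j. if i < k \<and> i = j then d i else 0)"

abbreviation mat_one :: "nat \<Rightarrow> nat \<Rightarrow> nat \<Rightarrow> complex" where
  "mat_one k \<equiv> diag_mat k (\<lambda>_. 1)"

definition unitary :: "nat \<Rightarrow> (nat \<Rightarrow> nat \<Rightarrow> complex) \<Rightarrow> bool" where
  "unitary k U \<longleftrightarrow> U \<in> mats k k \<and> mat_mul k U (mat_adjoint U) = mat_one k
     \<and> mat_mul k (mat_adjoint U) U = mat_one k"

lemma mats_mat_mul: "A \<in> mats k k \<Longrightarrow> B \<in> mats k k \<Longrightarrow> mat_mul k A B \<in> mats k k"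
  by (simp add: mats_def mat_mul_def)

lemma mats_mat_adjoint: "A \<in> mats k k \<Longrightarrow> mat_adjoint A \<in> mats k k"
  by (simp add: mats_def mat_adjoint_def)

lemma mats_diag_mat: "diag_mat k d \<in> mats k k"
  by (simp add: mats_def diag_mat_def)

lemma mat_adjoint_mat_adjoint [simp]: "mat_adjoint (mat_adjoint A) = A"
  by (simp add: mat_adjoint_def)

lemma mat_adjoint_diag_mat: "mat_adjoint (diag_mat k d) = diag_mat k (\<lambda>i. cnj (d i))"
  by (auto simp: mat_adjoint_def diag_mat_def fun_eq_iff)

lemma mat_adjoint_mat_mul: "mat_adjoint (mat_mul k A B) = mat_mul k (mat_adjoint B) (mat_adjoint A)"
  by (auto simp: mat_mul_def mat_adjoint_def fun_eq_iff mult.commute)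

lemma mat_mul_assoc: "mat_mul k (mat_mul k A B) C = mat_mul k A (mat_mul k B C)"
proof -
  have "(\<Sum>l<k. (\<Sum>p<k. A i p * B p l) * C l j) = (\<Sum>p<k. A i p * (\<Sum>l<k. B p l * C l j))"
    for i j
    unfolding sum_distrib_left sum_distrib_right by (subst sum.swap) (simp add: mult.assoc)
  then show ?thesis by (simp add: mat_mul_def fun_eq_iff)
qed

lemma mat_mul_diag_left:
  "mat_mul k (diag_mat k d) A = (\<lambda>i j. if i < k then d i * A i j else 0)"
  by (auto simp: mat_mul_def diag_mat_def fun_eq_iff if_distrib[of "\<lambda>x. x * _"] cong: if_cong)

lemma mat_mul_diag_right:
  "mat_mul k A (diag_mat k d) = (\<lambda>i j. if j < k then A i j * d j else 0)"
  by (auto simp: mat_mul_def diag_mat_def fun_eq_iff if_distrib[of "\<lambda>x. _ * x"] cong: if_cong)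

lemma mat_mul_one_left: "A \<in> mats k k \<Longrightarrow> mat_mul k (mat_one k) A = A"
  by (auto simp: mat_mul_diag_left mats_def fun_eq_iff)

lemma mat_mul_one_right: "A \<in> mats k k \<Longrightarrow> mat_mul k A (mat_one k) = A"
  by (auto simp: mat_mul_diag_right mats_def fun_eq_iff)

lemma mat_mul_diag_diag: "mat_mul k (diag_mat k d) (diag_mat k e) = diag_mat k (\<lambda>i. d i * e i)"
  unfolding mat_mul_diag_left by (auto simp: diag_mat_def fun_eq_iff)

lemma unitary_mats: "unitary k U \<Longrightarrow> U \<in> mats k k"
  by (simp add: unitary_def)

lemma unitary_mat_adjoint: "unitary k U \<Longrightarrow> unitary k (mat_adjoint U)"
  by (auto simp: unitary_def mats_mat_adjoint)

lemma unitary_mat_one: "unitary k (mat_one k)"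
  by (simp add: unitary_def mat_adjoint_diag_mat mat_mul_one_left mats_diag_mat)

lemma unitary_mat_mul:
  assumes U: "unitary k U" and V: "unitary k V"
  shows "unitary k (mat_mul k U V)"
proof -
  have "mat_mul k (mat_mul k U V) (mat_adjoint (mat_mul k U V))
      = mat_mul k U (mat_mul k (mat_mul k V (mat_adjoint V)) (mat_adjoint U))"
    by (simp add: mat_adjoint_mat_mul mat_mul_assoc)
  moreover have "mat_mul k (mat_adjoint (mat_mul k U V)) (mat_mul k U V)
      = mat_mul k (mat_adjoint V) (mat_mul k (mat_mul k (mat_adjoint U) U) V)"
    by (simp add: mat_adjoint_mat_mul mat_mul_assoc)
  ultimately show ?thesis
    using assms by (simp add: unitary_def mat_mul_one_left mats_mat_adjoint mats_mat_mul)
qed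

lemma unitary_diag_mat:
  assumes "\<And>i. i < k \<Longrightarrow> cmod (d i) = 1"
  shows "unitary k (diag_mat k d)"
proof -
  have "d i * cnj (d i) = 1" if "i < k" for i
    using assms[OF that] by (simp add: complex_mult_cnj cmod_power2[symmetric])
  then show ?thesis
    unfolding unitary_def mat_adjoint_diag_mat mat_mul_diag_diag
    by (auto simp: mats_def diag_mat_def fun_eq_iff mult.commute)
qed

lemma unitary_orthonormal_cols:
  "unitary k U \<Longrightarrow> i < k \<Longrightarrow> j < k \<Longrightarrow> (\<Sum>l<k. cnj (U l i) * U l j) = (if i = j then 1 else 0)"
  by (auto simp: unitary_def mat_mul_def mat_adjoint_def diag_mat_def fun_eq_iff)

lemma unitary_orthonormal_rows:
  "unitary k U \<Longrightarrow> i < k \<Longrightarrow> j < k \<Longrightarrow> (\<Sum>l<k. U i l * cnj (U j l)) = (if i = j then 1 else 0)"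
  by (auto simp: unitary_def mat_mul_def mat_adjoint_def diag_mat_def fun_eq_iff)

definition cinner :: "nat \<Rightarrow> (nat \<Rightarrow> complex) \<Rightarrow> (nat \<Rightarrow> complex) \<Rightarrow> complex" where
  "cinner k x y = (\<Sum>i<k. x i * cnj (y i))"

definition sqnorm :: "nat \<Rightarrow> (nat \<Rightarrow> complex) \<Rightarrow> real" where
  "sqnorm k x = (\<Sum>i<k. (cmod (x i))\<^sup>2)"

lemma cvnorm_sqnorm: "cvnorm k x = sqrt (sqnorm k x)"
  by (simp add: cvnorm_def sqnorm_def)

lemma sqnorm_nonneg: "0 \<le> sqnorm k x"
  by (simp add: sqnorm_def sum_nonneg)

lemma sqnorm_eq_0D: "sqnorm k x = 0 \<Longrightarrow> j < k \<Longrightarrow> x j = 0"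
  by (simp add: sqnorm_def sum_nonneg_eq_0_iff)

lemma sqnorm_scale: "sqnorm k (\<lambda>i. a * x i) = (cmod a)\<^sup>2 * sqnorm k x"
  by (simp add: sqnorm_def sum_distrib_left norm_mult power_mult_distrib)

lemma cinner_self: "cinner k x x = of_real (sqnorm k x)"
  unfolding cinner_def sqnorm_def of_real_sum
  by (rule sum.cong) (simp_all add: complex_norm_square[symmetric])

lemma cinner_commute: "cinner k y x = cnj (cinner k x y)"
  by (simp add: cinner_def mult.commute)

lemma cinner_add_left: "cinner k (\<lambda>i. x i + y i) z = cinner k x z + cinner k y z"
  by (simp add: cinner_def sum.distrib distrib_right)

lemma cinner_add_right: "cinner k z (\<lambda>i. x i + y i) = cinner k z x + cinner k z y"
  by (simp add: cinner_def sum.distrib distrib_left)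

lemma cinner_scale_right: "cinner k y (\<lambda>i. c * z i) = cnj c * cinner k y z"
  by (simp add: cinner_def sum_distrib_left mult_ac)

lemma sqnorm_add: "sqnorm k (\<lambda>i. x i + y i) = sqnorm k x + 2 * Re (cinner k x y) + sqnorm k y"
proof -
  have "of_real (sqnorm k (\<lambda>i. x i + y i))
      = cinner k x x + (cinner k x y + cnj (cinner k x y)) + cinner k y y"
    by (simp add: cinner_self[symmetric] cinner_add_left cinner_add_right cinner_commute[of k y x])
  also have "\<dots> = of_real (sqnorm k x + 2 * Re (cinner k x y) + sqnorm k y)"
    by (simp add: cinner_self complex_add_cnj)
  finally show ?thesis by (simp only: of_real_eq_iff)
qed

lemma mat_vec_mat_mul: "mat_vec k (mat_mul k A B) x = mat_vec k A (mat_vec k B x)"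
proof -
  have "(\<Sum>j<k. (\<Sum>l<k. A i l * B l j) * x j) = (\<Sum>l<k. A i l * (\<Sum>j<k. B l j * x j))" for i
    unfolding sum_distrib_left sum_distrib_right by (subst sum.swap) (simp add: mult.assoc)
  then show ?thesis by (simp add: mat_mul_def mat_vec_def fun_eq_iff)
qed

lemma mat_vec_diag: "mat_vec k (diag_mat k d) x = (\<lambda>i. if i < k then d i * x i else 0)"
  by (auto simp: mat_vec_def diag_mat_def fun_eq_iff if_distrib[of "\<lambda>z. z * _"] cong: if_cong)

lemma mat_vec_add: "mat_vec k M (\<lambda>i. x i + y i) = (\<lambda>i. mat_vec k M x i + mat_vec k M y i)"
  by (simp add: mat_vec_def fun_eq_iff sum.distrib distrib_left)

lemma mat_vec_scale: "mat_vec k M (\<lambda>i. a * x i) = (\<lambda>i. a * mat_vec k M x i)"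
  by (simp add: mat_vec_def fun_eq_iff sum_distrib_left mult_ac)

lemma mat_vec_cong: "(\<And>j. j < k \<Longrightarrow> x j = y j) \<Longrightarrow> mat_vec k M x = mat_vec k M y"
  by (simp add: mat_vec_def)

lemma cinner_mat_vec: "cinner k (mat_vec k A x) y = cinner k x (mat_vec k (mat_adjoint A) y)"
proof -
  have "(\<Sum>i<k. (\<Sum>j<k. A i j * x j) * cnj (y i)) = (\<Sum>j<k. x j * cnj (\<Sum>i<k. cnj (A i j) * y i))"
    unfolding sum_distrib_left sum_distrib_right cnj_sum complex_cnj_mult complex_cnj_cnj
    by (subst sum.swap) (simp add: mult_ac)
  then show ?thesis by (simp add: cinner_def mat_vec_def mat_adjoint_def)
qed

lemma unitary_sqnorm:
  assumes "unitary k U" shows "sqnorm k (mat_vec k U x) = sqnorm k x"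
proof -
  have "of_real (sqnorm k (mat_vec k U x)) = cinner k x (mat_vec k (mat_one k) x)"
    using assms by (simp add: cinner_self[symmetric] cinner_mat_vec mat_vec_mat_mul[symmetric] unitary_def)
  also have "\<dots> = cinner k x x"
    by (simp add: mat_vec_diag cinner_def)
  finally show ?thesis by (simp add: cinner_self)
qed

section \<open>Singular value decomposition\<close>

definition vecs :: "nat \<Rightarrow> (nat \<Rightarrow> complex) set" where
  "vecs k = {x. \<forall>i. k \<le> i \<longrightarrow> x i = 0}"

definition unit_vec :: "nat \<Rightarrow> nat \<Rightarrow> complex" where
  "unit_vec j = (\<lambda>i. if i = j then 1 else 0)"

lemma unit_vec_vecs: "j < k \<Longrightarrow> unit_vec j \<in> vecs k"
  by (simp add: vecs_def unit_vec_def)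

lemma sqnorm_unit_vec: "j < k \<Longrightarrow> sqnorm k (unit_vec j) = 1"
  by (simp add: sqnorm_def unit_vec_def if_distrib[of "\<lambda>x. (cmod x)\<^sup>2"] cong: if_cong)

lemma cinner_unit_vec: "j < k \<Longrightarrow> cinner k x (unit_vec j) = x j"
  by (simp add: cinner_def unit_vec_def if_distrib[of cnj] if_distrib[of "\<lambda>z. _ * z"] cong: if_cong)

lemma compact_unit_sphere: "compact {x \<in> vecs k. sqnorm k x = 1}"
proof -
  let ?S = "{x \<in> vecs k. sqnorm k x = 1}"
  have coord: "continuous_on UNIV (\<lambda>x::nat \<Rightarrow> complex. x i)" for i
    by (rule continuous_on_product_then_coordinatewise[OF continuous_on_id])
  define K where "K i = (if i < k then cball (0::complex) 1 else {0})" for i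
  have "compactin (product_topology (\<lambda>i. euclidean) UNIV) (PiE UNIV K)"
    by (subst compactin_PiE) (auto simp: K_def)
  then have compact_box: "compact (Pi UNIV K)"
    by (simp add: euclidean_product_topology PiE_UNIV_domain)
  have closed_sphere: "closed ?S"
  proof -
    have "vecs k = (\<Inter>i\<in>{k..}. {x. x i = 0})"
      by (auto simp: vecs_def)
    then have "closed (vecs k)"
      by (simp add: closed_INT closed_Collect_eq[OF coord continuous_on_const])
    moreover have "closed {x. sqnorm k x = 1}"
      unfolding sqnorm_def by (intro closed_Collect_eq continuous_intros coord)
    ultimately show ?thesis
      by (simp add: Collect_conj_eq closed_Int)
  qed
  have "?S \<subseteq> Pi UNIV K"
  proof safe
    fix x i assume x: "x \<in> vecs k" "sqnorm k x = 1"
    show "x i \<in> K i"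
    proof (cases "i < k")
      case True
      have "(cmod (x i))\<^sup>2 \<le> sqnorm k x"
        unfolding sqnorm_def using True by (intro member_le_sum) auto
      then show ?thesis using True x by (simp add: K_def power_le_one_iff)
    qed (use x in \<open>simp add: K_def vecs_def\<close>)
  qed
  then have "?S = Pi UNIV K \<inter> ?S"
    by blast
  then show ?thesis
    using compact_Int_closed[OF compact_box closed_sphere] by simp
qed

lemma sqnorm_mat_vec_maximizer:
  assumes "0 < k"
  obtains w where "w \<in> vecs k" "sqnorm k w = 1"
    "\<And>x. sqnorm k (mat_vec k Z x) \<le> sqnorm k (mat_vec k Z w) * sqnorm k x"
proof -
  let ?S = "{x \<in> vecs k. sqnorm k x = 1}"
  let ?f = "\<lambda>x. sqnorm k (mat_vec k Z x)"
  have coord: "continuous_on S (\<lambda>x::nat \<Rightarrow> complex. x i)" for S i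
    by (rule continuous_on_product_then_coordinatewise[OF continuous_on_id])
  have "unit_vec 0 \<in> ?S"
    using assms by (simp add: unit_vec_vecs sqnorm_unit_vec)
  moreover have "continuous_on ?S ?f"
    unfolding sqnorm_def mat_vec_def by (intro continuous_intros coord)
  ultimately obtain w where w: "w \<in> ?S" and max: "\<And>x. x \<in> ?S \<Longrightarrow> ?f x \<le> ?f w"
    using continuous_attains_sup[OF compact_unit_sphere] by blast
  have "?f x \<le> ?f w * sqnorm k x" for x
  proof (cases "sqnorm k x = 0")
    case True
    then have "mat_vec k Z x = mat_vec k Z (\<lambda>_. 0)"
      by (intro mat_vec_cong) (simp add: sqnorm_eq_0D)
    then show ?thesis by (simp add: True mat_vec_def sqnorm_def[of k "\<lambda>_. 0"])
  next
    case False
    define c where "c = sqrt (sqnorm k x)"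
    have c: "0 < c" "c\<^sup>2 = sqnorm k x"
      using False sqnorm_nonneg[of k x] by (simp_all add: c_def)
    define y where "y i = (if i < k then of_real (1 / c) * x i else 0)" for i
    have "mat_vec k Z y = mat_vec k Z (\<lambda>i. of_real (1 / c) * x i)"
      by (rule mat_vec_cong) (simp add: y_def)
    then have fy: "?f y = ?f x / c\<^sup>2"
      by (simp only: mat_vec_scale sqnorm_scale) (simp add: norm_divide power_divide)
    have "sqnorm k y = sqnorm k (\<lambda>i. of_real (1 / c) * x i)"
      by (simp add: sqnorm_def y_def)
    then have "y \<in> ?S"
      using c False by (simp only: sqnorm_scale) (simp add: norm_divide power_divide vecs_def y_def)
    then have "?f x / c\<^sup>2 \<le> ?f w"
      using max fy by metis
    then show ?thesis
      using c(1) by (simp add: c(2)[symmetric] divide_le_eq)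
  qed
  then show ?thesis
    using that w by blast
qed

lemma linear_coeff_eq_0_if_nonpos:
  fixes A B :: real
  assumes "\<And>e. e * A + e\<^sup>2 * B \<le> 0"
  shows "A = 0"
proof (rule ccontr)
  assume "A \<noteq> 0"
  define t where "t = 1 / (1 + \<bar>B\<bar>)"
  have t: "0 < t" "0 < 1 + t * B"
    using abs_ge_self[of "-B"] by (auto simp: t_def field_simps)
  have "(t * A) * A + (t * A)\<^sup>2 * B = t * A\<^sup>2 * (1 + t * B)"
    by (simp add: power2_eq_square algebra_simps)
  moreover have "0 < t * A\<^sup>2 * (1 + t * B)"
    using t \<open>A \<noteq> 0\<close> by simp
  ultimately show False
    using assms[of "t * A"] by linarith
qed

text \<open>The first-order condition at a maximiser \<open>w\<close> of \<open>\<parallel>Z x\<parallel>\<^sup>2 / \<parallel>x\<parallel>\<^sup>2\<close>.\<close>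

lemma cinner_eq_if_attains_bound:
  assumes bound: "\<And>x. sqnorm k (mat_vec k Z x) \<le> s * sqnorm k x"
    and attains: "sqnorm k (mat_vec k Z w) = s * sqnorm k w"
  shows "cinner k (mat_vec k Z w) (mat_vec k Z v) = of_real s * cinner k w v"
proof -
  define P where "P = cinner k (mat_vec k Z w) (mat_vec k Z v)"
  define Q where "Q = cinner k w v"
  define N where "N = sqnorm k (mat_vec k Z v) - s * sqnorm k v"
  have "Re (cnj d * (P - of_real s * Q)) = 0" for d
  proof (rule linear_coeff_eq_0_if_nonpos)
    fix e :: real
    define c where "c = of_real e * d"
    have "sqnorm k (mat_vec k Z (\<lambda>i. w i + c * v i)) \<le> s * sqnorm k (\<lambda>i. w i + c * v i)"
      by (rule bound)
    then have "2 * Re (cnj c * P) + (cmod c)\<^sup>2 * sqnorm k (mat_vec k Z v)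
        \<le> s * (2 * Re (cnj c * Q) + (cmod c)\<^sup>2 * sqnorm k v)"
      by (simp add: mat_vec_add mat_vec_scale sqnorm_add sqnorm_scale cinner_scale_right attains
          P_def Q_def algebra_simps)
    then have "2 * e * Re (cnj d * (P - of_real s * Q)) + e\<^sup>2 * (cmod d)\<^sup>2 * N \<le> 0"
      by (simp add: c_def N_def norm_mult power_mult_distrib algebra_simps)
    then show "e * Re (cnj d * (P - of_real s * Q)) + e\<^sup>2 * ((cmod d)\<^sup>2 * N / 2) \<le> 0"
      by simp
  qed
  from this[of 1] this[of \<i>] have "P - of_real s * Q = 0"
    by (simp add: complex_eq_iff)
  then show ?thesis
    by (simp add: P_def Q_def)
qed

lemma mat_vec_vecs: "M \<in> mats k k \<Longrightarrow> mat_vec k M x \<in> vecs k"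
  by (simp add: mat_vec_def mats_def vecs_def)

lemma vecs_sqnorm_eq_0: "x \<in> vecs k \<Longrightarrow> sqnorm k x = 0 \<Longrightarrow> x = (\<lambda>_. 0)"
  unfolding vecs_def fun_eq_iff using sqnorm_eq_0D not_le by blast

lemma mat_adjoint_mat_vec_if_attains_bound:
  assumes Z: "Z \<in> mats k k" and w: "w \<in> vecs k"
    and bound: "\<And>x. sqnorm k (mat_vec k Z x) \<le> s * sqnorm k x"
    and attains: "sqnorm k (mat_vec k Z w) = s * sqnorm k w"
  shows "mat_vec k (mat_adjoint Z) (mat_vec k Z w) = (\<lambda>i. of_real s * w i)"
proof
  fix j
  show "mat_vec k (mat_adjoint Z) (mat_vec k Z w) j = of_real s * w j"
  proof (cases "j < k")
    case True
    have "cinner k (mat_vec k Z w) (mat_vec k Z (unit_vec j)) = of_real s * cinner k w (unit_vec j)"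
      by (rule cinner_eq_if_attains_bound[OF bound attains])
    then have "cinner k (mat_vec k (mat_adjoint Z) (mat_vec k Z w)) (unit_vec j) = of_real s * w j"
      using True by (simp add: cinner_mat_vec[of k "mat_adjoint Z"] cinner_unit_vec)
    then show ?thesis
      using True by (simp add: cinner_unit_vec)
  next
    case False
    then show ?thesis
      using w mat_vec_vecs[OF mats_mat_adjoint[OF Z]] by (simp add: vecs_def)
  qed
qed

lemma mat_vec_mat_adjoint_eq_0:
  assumes Z: "Z \<in> mats k k" and Z0: "\<And>x. mat_vec k Z x = (\<lambda>_. 0)"
  shows "mat_vec k (mat_adjoint Z) y = (\<lambda>_. 0)"
proof -
  have "of_real (sqnorm k (mat_vec k (mat_adjoint Z) y))
      = cinner k y (mat_vec k Z (mat_vec k (mat_adjoint Z) y))"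
    by (simp add: cinner_self[symmetric] cinner_mat_vec)
  then have "sqnorm k (mat_vec k (mat_adjoint Z) y) = 0"
    by (simp add: Z0 cinner_def)
  then show ?thesis
    by (rule vecs_sqnorm_eq_0[OF mat_vec_vecs[OF mats_mat_adjoint[OF Z]]])
qed

lemma singular_pair:
  assumes k: "0 < k" and Z: "Z \<in> mats k k"
  obtains \<sigma> u w where "0 \<le> \<sigma>" "u \<in> vecs k" "sqnorm k u = 1" "w \<in> vecs k" "sqnorm k w = 1"
    "mat_vec k Z w = (\<lambda>i. of_real \<sigma> * u i)"
    "mat_vec k (mat_adjoint Z) u = (\<lambda>i. of_real \<sigma> * w i)"
proof -
  obtain w where w: "w \<in> vecs k" "sqnorm k w = 1"
    and bound: "\<And>x. sqnorm k (mat_vec k Z x) \<le> sqnorm k (mat_vec k Z w) * sqnorm k x"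
    using sqnorm_mat_vec_maximizer[OF k] by blast
  define s where "s = sqnorm k (mat_vec k Z w)"
  show ?thesis
  proof (cases "s = 0")
    case True
    have "sqnorm k (mat_vec k Z x) = 0" for x
      using bound[of x] True sqnorm_nonneg[of k "mat_vec k Z x"] by (simp add: s_def)
    then have Z0: "mat_vec k Z x = (\<lambda>_. 0)" for x
      by (rule vecs_sqnorm_eq_0[OF mat_vec_vecs[OF Z]])
    show ?thesis
      using that[of 0 w w] w Z0 mat_vec_mat_adjoint_eq_0[OF Z Z0] by simp
  next
    case False
    define \<sigma> where "\<sigma> = sqrt s"
    have \<sigma>: "0 < \<sigma>" "\<sigma>\<^sup>2 = s"
      using False sqnorm_nonneg[of k "mat_vec k Z w"] by (simp_all add: \<sigma>_def s_def)
    define u where "u = (\<lambda>i. of_real (1 / \<sigma>) * mat_vec k Z w i)"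
    have u_norm: "sqnorm k u = 1"
      using \<sigma>(1) unfolding u_def sqnorm_scale s_def[symmetric] \<sigma>(2)[symmetric]
      by (simp add: norm_divide power_divide)
    have u_vecs: "u \<in> vecs k"
      using mat_vec_vecs[OF Z] by (simp add: u_def vecs_def)
    have Zw: "mat_vec k Z w = (\<lambda>i. of_real \<sigma> * u i)"
      using \<sigma> by (simp add: u_def fun_eq_iff)
    have "mat_vec k (mat_adjoint Z) (mat_vec k Z w) = (\<lambda>i. of_real (\<sigma>\<^sup>2) * w i)"
      using bound w by (intro mat_adjoint_mat_vec_if_attains_bound[OF Z]) (simp_all add: \<sigma>(2) s_def)
    then have Zu: "mat_vec k (mat_adjoint Z) u = (\<lambda>i. of_real \<sigma> * w i)"
      using \<sigma>(1) unfolding u_def mat_vec_scale by (simp add: power2_eq_square)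
    show ?thesis
      by (rule that[OF less_imp_le[OF \<sigma>(1)] u_vecs u_norm w Zw Zu])
  qed
qed

text \<open>For \<open>v = 0\<close> division by zero makes \<open>householder k v\<close> the identity.\<close>

definition householder :: "nat \<Rightarrow> (nat \<Rightarrow> complex) \<Rightarrow> nat \<Rightarrow> nat \<Rightarrow> complex" where
  "householder k v = (\<lambda>i j. if i < k \<and> j < k
     then (if i = j then 1 else 0) - 2 * v i * cnj (v j) / of_real (sqnorm k v) else 0)"

lemma householder_square: "mat_mul k (householder k v) (householder k v) = mat_one k"
proof (cases "sqnorm k v = 0")
  case True
  then have "householder k v = mat_one k"
    by (auto simp: householder_def diag_mat_def fun_eq_iff)
  then show ?thesis
    by (simp add: mat_mul_one_left mats_diag_mat)
next
  case False
  define n where "n = complex_of_real (sqnorm k v)"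
  have n: "n \<noteq> 0" "(\<Sum>l<k. v l * cnj (v l)) = n"
    using False cinner_self[of k v] by (simp_all add: n_def cinner_def)
  have "(\<Sum>l<k. ((if i = l then 1 else 0) - 2 * v i * cnj (v l) / n)
      * ((if l = j then 1 else 0) - 2 * v l * cnj (v j) / n)) = (if i = j then 1 else 0)"
    if "i < k" "j < k" for i j
  proof -
    have "(\<Sum>l<k. ((if i = l then 1 else 0) - 2 * v i * cnj (v l) / n)
        * ((if l = j then 1 else 0) - 2 * v l * cnj (v j) / n))
      = (\<Sum>l<k. (if i = l then 1 else 0) * (if l = j then 1 else 0))
        - (\<Sum>l<k. (if i = l then 1 else 0) * (2 * v l * cnj (v j) / n))
        - (\<Sum>l<k. (2 * v i * cnj (v l) / n) * (if l = j then 1 else 0))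
        + (\<Sum>l<k. (2 * v i * cnj (v l) / n) * (2 * v l * cnj (v j) / n))"
      by (simp add: algebra_simps sum.distrib sum_subtractf)
    also have "\<dots> = (if i = j then 1 else 0) - 2 * v i * cnj (v j) / n - 2 * v i * cnj (v j) / n
        + 4 * v i * cnj (v j) / (n * n) * (\<Sum>l<k. v l * cnj (v l))"
      using that
      by (simp add: if_distrib[of "\<lambda>x. x * _"] if_distrib[of "\<lambda>x. _ * x"] sum_distrib_left
          sum_divide_distrib[symmetric] mult_ac cong: if_cong)
    also have "\<dots> = (if i = j then 1 else 0)"
      using n by (simp add: field_simps)
    finally show ?thesis .
  qed
  moreover have "mat_mul k (householder k v) (householder k v) i j = (if i < k \<and> j < k then
      (\<Sum>l<k. ((if i = l then 1 else 0) - 2 * v i * cnj (v l) / n)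
        * ((if l = j then 1 else 0) - 2 * v l * cnj (v j) / n)) else 0)" for i j
    unfolding mat_mul_def householder_def n_def by (auto intro!: sum.cong sum.neutral)
  ultimately show ?thesis
    by (simp add: diag_mat_def fun_eq_iff)
qed

lemma unitary_householder: "unitary k (householder k v)"
proof -
  have "householder k v \<in> mats k k" "mat_adjoint (householder k v) = householder k v"
    by (auto simp: householder_def mats_def mat_adjoint_def fun_eq_iff)
  then show ?thesis
    by (simp add: unitary_def householder_square)
qed

lemma unit_phase:
  obtains \<phi> :: complex where "cmod \<phi> = 1" "\<phi> * cnj z = of_real (cmod z)"
proof (cases "z = 0")
  case True
  then show ?thesis
    using that[of 1] by simp
next
  case False
  have "z / of_real (cmod z) * cnj z = of_real ((cmod z)\<^sup>2) / of_real (cmod z)"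
    by (simp add: complex_norm_square[symmetric])
  then show ?thesis
    using that[of "z / of_real (cmod z)"] False by (simp add: norm_divide power2_eq_square)
qed

lemma sqnorm_minus_phase_unit_vec:
  assumes k: "0 < k" and u: "sqnorm k u = 1"
    and \<phi>: "cmod \<phi> = 1" "\<phi> * cnj (u 0) = of_real (cmod (u 0))"
  shows "sqnorm k (\<lambda>i. u i + (- \<phi>) * unit_vec 0 i) = 2 - 2 * cmod (u 0)"
proof -
  have "sqnorm k (\<lambda>i. u i + (- \<phi>) * unit_vec 0 i) = 1 + 2 * Re (- (cnj \<phi> * u 0)) + 1"
    unfolding sqnorm_add cinner_scale_right sqnorm_scale
    using u \<phi>(1) k by (simp add: sqnorm_unit_vec cinner_unit_vec)
  also have "cnj \<phi> * u 0 = of_real (cmod (u 0))"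
    using arg_cong[OF \<phi>(2), of cnj] by (simp add: mult.commute)
  finally show ?thesis
    by simp
qed

lemma householder_first_column:
  assumes k: "0 < k" and u: "u \<in> vecs k" "sqnorm k u = 1"
    and \<phi>: "cmod \<phi> = 1" "\<phi> * cnj (u 0) = of_real (cmod (u 0))"
  shows "householder k (\<lambda>i. u i + (- \<phi>) * unit_vec 0 i) i 0 * \<phi> = u i"
proof -
  define v where "v = (\<lambda>i. u i + (- \<phi>) * unit_vec 0 i)"
  have "\<phi> * cnj \<phi> = 1"
    using complex_norm_square[of \<phi>] \<phi>(1) by simp
  have sqnorm_v: "sqnorm k v = 2 - 2 * cmod (u 0)"
    unfolding v_def by (rule sqnorm_minus_phase_unit_vec[OF k u(2) \<phi>])
  show ?thesis
  proof (cases "i < k")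
    case False
    then show ?thesis
      using u(1) by (simp add: householder_def vecs_def)
  next
    case True
    have "householder k v i 0 * \<phi>
        = ((if i = 0 then 1 else 0) - 2 * v i * cnj (v 0) / of_real (sqnorm k v)) * \<phi>"
      using True k by (simp add: householder_def)
    also have "\<dots> = u i"
    proof (cases "sqnorm k v = 0")
      case True
      then have "v i = 0"
        using \<open>i < k\<close> by (rule sqnorm_eq_0D)
      then show ?thesis
        using True by (auto simp: v_def unit_vec_def)
    next
      case False
      define c where "c = complex_of_real (cmod (u 0))"
      have n: "of_real (sqnorm k v) = 2 - 2 * c" "2 - 2 * c \<noteq> 0"
        using False sqnorm_v by (simp_all add: c_def)
      have h: "\<phi> * cnj (v 0) = c - 1"
        using \<phi>(2) \<open>\<phi> * cnj \<phi> = 1\<close> by (simp add: v_def unit_vec_def c_def algebra_simps)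
      have "2 * v i * cnj (v 0) / of_real (sqnorm k v) * \<phi> = 2 * v i * (\<phi> * cnj (v 0)) / (2 - 2 * c)"
        unfolding n by (simp add: mult_ac)
      also have "\<dots> = - v i"
        unfolding h using n(2) by (simp add: field_simps)
      finally show ?thesis
        by (simp add: v_def unit_vec_def algebra_simps)
    qed
    finally show ?thesis
      by (simp add: v_def)
  qed
qed

lemma unitary_with_first_column:
  assumes k: "0 < k" and u: "u \<in> vecs k" "sqnorm k u = 1"
  obtains U where "unitary k U" "\<And>i. U i 0 = u i"
proof -
  obtain \<phi> where \<phi>: "cmod \<phi> = 1" "\<phi> * cnj (u 0) = of_real (cmod (u 0))"
    by (rule unit_phase)
  define U where "U = mat_mul k (householder k (\<lambda>i. u i + (- \<phi>) * unit_vec 0 i))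
    (diag_mat k (\<lambda>i. if i = 0 then \<phi> else 1))"
  have "unitary k U"
    unfolding U_def by (intro unitary_mat_mul unitary_householder unitary_diag_mat) (simp add: \<phi>)
  moreover have "U i 0 = u i" for i
    using householder_first_column[OF k u \<phi>, of i] k by (simp add: U_def mat_mul_diag_right)
  ultimately show ?thesis
    using that by blast
qed

definition border :: "complex \<Rightarrow> (nat \<Rightarrow> nat \<Rightarrow> complex) \<Rightarrow> nat \<Rightarrow> nat \<Rightarrow> complex" where
  "border a M = (\<lambda>i j. if i = 0 \<and> j = 0 then a else if 0 < i \<and> 0 < j then M (i - 1) (j - 1) else 0)"

lemma mats_border: "M \<in> mats k k \<Longrightarrow> border a M \<in> mats (Suc k) (Suc k)"
  by (auto simp: mats_def border_def)

lemma mat_adjoint_border: "mat_adjoint (border a M) = border (cnj a) (mat_adjoint M)"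
  by (auto simp: mat_adjoint_def border_def fun_eq_iff)

lemma mat_mul_border: "mat_mul (Suc k) (border a A) (border b B) = border (a * b) (mat_mul k A B)"
proof -
  have "mat_mul (Suc k) (border a A) (border b B) i j
      = border a A i 0 * border b B 0 j + (\<Sum>l<k. border a A i (Suc l) * border b B (Suc l) j)"
    for i j
    unfolding mat_mul_def by (rule sum.lessThan_Suc_shift)
  then show ?thesis
    by (auto simp: fun_eq_iff border_def mat_mul_def)
qed

lemma border_diag_mat:
  "border a (diag_mat k d) = diag_mat (Suc k) (\<lambda>i. if i = 0 then a else d (i - 1))"
  by (auto simp: border_def diag_mat_def fun_eq_iff)

lemma unitary_border: "unitary k M \<Longrightarrow> unitary (Suc k) (border 1 M)"
  by (simp add: unitary_def mats_border mat_adjoint_border mat_mul_border border_diag_mat)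

lemma mat_mul_col: "mat_mul k A B i j = mat_vec k A (\<lambda>l. B l j) i"
  by (simp add: mat_mul_def mat_vec_def)

lemma first_column_of_conj:
  assumes U: "unitary k U" "0 < k" "\<And>i. U i 0 = u i" and W: "\<And>i. W i 0 = w i"
    and Zw: "mat_vec k Z w = (\<lambda>i. of_real \<sigma> * u i)"
  shows "mat_mul k (mat_mul k (mat_adjoint U) Z) W i 0 = (if i = 0 then of_real \<sigma> else 0)"
proof -
  have "mat_mul k (mat_mul k (mat_adjoint U) Z) W i 0 = of_real \<sigma> * mat_mul k (mat_adjoint U) U i 0"
    using U(3) W by (simp add: mat_mul_col mat_vec_mat_mul Zw mat_vec_scale)
  then show ?thesis
    using U(1,2) by (simp add: unitary_def diag_mat_def)
qed

lemma singular_value_deflation: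
  assumes Z: "Z \<in> mats (Suc k) (Suc k)"
  shows "\<exists>U W \<sigma> Z'. unitary (Suc k) U \<and> unitary (Suc k) W \<and> 0 \<le> \<sigma> \<and> Z' \<in> mats k k \<and>
    mat_mul (Suc k) (mat_mul (Suc k) (mat_adjoint U) Z) W = border (of_real \<sigma>) Z'"
proof -
  let ?K = "Suc k"
  obtain \<sigma> u w where \<sigma>: "0 \<le> \<sigma>" and u: "u \<in> vecs ?K" "sqnorm ?K u = 1"
    and w: "w \<in> vecs ?K" "sqnorm ?K w = 1"
    and Zw: "mat_vec ?K Z w = (\<lambda>i. of_real \<sigma> * u i)"
    and Zu: "mat_vec ?K (mat_adjoint Z) u = (\<lambda>i. of_real \<sigma> * w i)"
    by (rule singular_pair[OF zero_less_Suc Z])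
  obtain U where U: "unitary ?K U" "\<And>i. U i 0 = u i"
    using unitary_with_first_column[OF zero_less_Suc u] by blast
  obtain W where W: "unitary ?K W" "\<And>i. W i 0 = w i"
    using unitary_with_first_column[OF zero_less_Suc w] by blast
  define B where "B = mat_mul ?K (mat_mul ?K (mat_adjoint U) Z) W"
  have col: "B i 0 = (if i = 0 then of_real \<sigma> else 0)" for i
    unfolding B_def using U W Zw by (intro first_column_of_conj[where u = u and w = w]) auto
  have row: "B 0 j = (if j = 0 then of_real \<sigma> else 0)" for j
  proof -
    have "mat_adjoint B = mat_mul ?K (mat_mul ?K (mat_adjoint W) (mat_adjoint Z)) U"
      by (simp add: B_def mat_adjoint_mat_mul mat_mul_assoc)
    moreover have "mat_mul ?K (mat_mul ?K (mat_adjoint W) (mat_adjoint Z)) U j 0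
        = (if j = 0 then of_real \<sigma> else 0)"
      using U W Zu by (intro first_column_of_conj[where u = w and w = u]) auto
    ultimately have "cnj (B 0 j) = (if j = 0 then of_real \<sigma> else 0)"
      by (simp add: mat_adjoint_def fun_eq_iff)
    then show ?thesis
      by (metis complex_cnj_cnj complex_cnj_complex_of_real complex_cnj_zero)
  qed
  have "B \<in> mats ?K ?K"
    using U W Z by (simp add: B_def mats_mat_mul mats_mat_adjoint unitary_mats)
  define Z' where "Z' = (\<lambda>i j. B (Suc i) (Suc j))"
  have "Z' \<in> mats k k"
    using \<open>B \<in> mats ?K ?K\<close> by (simp add: Z'_def mats_def)
  moreover have "B = border (of_real \<sigma>) Z'"
  proof (intro ext)
    fix i j
    show "B i j = border (of_real \<sigma>) Z' i j"
      by (cases i; cases j) (simp_all add: border_def Z'_def col row)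
  qed
  ultimately show ?thesis
    using U(1) W(1) \<sigma> unfolding B_def by (intro exI[of _ U] exI[of _ W] exI[of _ \<sigma>] exI[of _ Z']) simp
qed

lemma singular_value_decomposition:
  "Z \<in> mats k k \<Longrightarrow> \<exists>U W s. unitary k U \<and> unitary k W \<and> (\<forall>i. 0 \<le> s i) \<and>
     mat_mul k (mat_mul k (mat_adjoint U) Z) W = diag_mat k (\<lambda>i. of_real (s i))"
proof (induction k arbitrary: Z)
  case 0
  then show ?case
    using unitary_mat_one[of 0] by (auto simp: mat_mul_def diag_mat_def fun_eq_iff)
next
  case (Suc k)
  obtain U1 W1 \<sigma> Z' where U1: "unitary (Suc k) U1" and W1: "unitary (Suc k) W1" and \<sigma>: "0 \<le> \<sigma>"
    and Z': "Z' \<in> mats k k"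
    and B: "mat_mul (Suc k) (mat_mul (Suc k) (mat_adjoint U1) Z) W1 = border (of_real \<sigma>) Z'"
    using singular_value_deflation[OF Suc.prems] by blast
  obtain U' W' s where U': "unitary k U'" and W': "unitary k W'" and s: "\<forall>i. 0 \<le> s i"
    and D: "mat_mul k (mat_mul k (mat_adjoint U') Z') W' = diag_mat k (\<lambda>i. of_real (s i))"
    using Suc.IH[OF Z'] by blast
  define U where "U = mat_mul (Suc k) U1 (border 1 U')"
  define W where "W = mat_mul (Suc k) W1 (border 1 W')"
  have "mat_mul (Suc k) (mat_mul (Suc k) (mat_adjoint U) Z) W
      = mat_mul (Suc k) (mat_mul (Suc k) (border 1 (mat_adjoint U')) (border (of_real \<sigma>) Z'))
          (border 1 W')"
    by (simp add: U_def W_def mat_adjoint_mat_mul mat_adjoint_border mat_mul_assoc flip: B)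
  also have "\<dots> = diag_mat (Suc k) (\<lambda>i. of_real (if i = 0 then \<sigma> else s (i - 1)))"
    by (simp add: mat_mul_border D border_diag_mat if_distrib[of of_real])
  finally have "mat_mul (Suc k) (mat_mul (Suc k) (mat_adjoint U) Z) W
      = diag_mat (Suc k) (\<lambda>i. of_real (if i = 0 then \<sigma> else s (i - 1)))" .
  moreover have "unitary (Suc k) U" "unitary (Suc k) W"
    unfolding U_def W_def by (simp_all add: unitary_mat_mul unitary_border U1 U' W1 W')
  ultimately show ?case
    using \<sigma> s by (intro exI[of _ U] exI[of _ W] exI[of _ "\<lambda>i. if i = 0 then \<sigma> else s (i - 1)"]) auto
qed

section \<open>The operator norm of \<open>Z Z\<^sup>*\<close>\<close>

lemma opnorm_cong:
  assumes "\<And>i j. i < k \<Longrightarrow> j < k \<Longrightarrow> M i j = M' i j"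
  shows "opnorm k M = opnorm k M'"
proof -
  have "cvnorm k (mat_vec k M x) = cvnorm k (mat_vec k M' x)" for x
    using assms by (simp add: cvnorm_def mat_vec_def)
  then show ?thesis
    by (simp add: opnorm_def)
qed

lemma opnorm_unitary_conj:
  assumes U: "unitary k U"
  shows "opnorm k (mat_mul k U (mat_mul k M (mat_adjoint U))) = opnorm k M"
proof -
  have norm_eq: "cvnorm k (mat_vec k U x) = cvnorm k x" "cvnorm k (mat_vec k (mat_adjoint U) x) = cvnorm k x"
    for x
    using U by (simp_all add: cvnorm_sqnorm unitary_sqnorm unitary_mat_adjoint)
  have "mat_vec k M (mat_vec k (mat_adjoint U) (mat_vec k U y)) = mat_vec k M y" for y
    using U by (intro mat_vec_cong) (simp add: mat_vec_mat_mul[symmetric] unitary_def mat_vec_diag)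
  then have "{cvnorm k (mat_vec k (mat_mul k U (mat_mul k M (mat_adjoint U))) x) | x. cvnorm k x \<le> 1}
      = {cvnorm k (mat_vec k M y) | y. cvnorm k y \<le> 1}"
    unfolding mat_vec_mat_mul norm_eq by (metis norm_eq(1,2))
  then show ?thesis
    by (simp add: opnorm_def)
qed

lemma opnorm_diag_mat:
  assumes i0: "i0 < k" and max: "\<And>i. i < k \<Longrightarrow> cmod (d i) \<le> cmod (d i0)"
  shows "opnorm k (diag_mat k d) = cmod (d i0)"
  unfolding opnorm_def
proof (rule cSup_eq_maximum)
  have "mat_vec k (diag_mat k d) (unit_vec i0) = (\<lambda>i. d i0 * unit_vec i0 i)"
    using i0 by (auto simp: mat_vec_diag unit_vec_def fun_eq_iff)
  then have "cvnorm k (mat_vec k (diag_mat k d) (unit_vec i0)) = cmod (d i0)"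
    using i0 by (simp add: cvnorm_sqnorm sqnorm_scale sqnorm_unit_vec)
  then show "cmod (d i0) \<in> {cvnorm k (mat_vec k (diag_mat k d) x) | x. cvnorm k x \<le> 1}"
    using i0 by (auto simp: cvnorm_sqnorm sqnorm_unit_vec intro!: exI[of _ "unit_vec i0"])
next
  fix y assume "y \<in> {cvnorm k (mat_vec k (diag_mat k d) x) | x. cvnorm k x \<le> 1}"
  then obtain x where y: "y = cvnorm k (mat_vec k (diag_mat k d) x)" and x: "sqnorm k x \<le> 1"
    by (auto simp: cvnorm_sqnorm)
  have "sqnorm k (mat_vec k (diag_mat k d) x) = (\<Sum>i<k. (cmod (d i))\<^sup>2 * (cmod (x i))\<^sup>2)"
    by (simp add: sqnorm_def mat_vec_diag norm_mult power_mult_distrib)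
  also have "\<dots> \<le> (\<Sum>i<k. (cmod (d i0))\<^sup>2 * (cmod (x i))\<^sup>2)"
    using max by (intro sum_mono mult_right_mono power_mono) auto
  also have "\<dots> = (cmod (d i0))\<^sup>2 * sqnorm k x"
    by (simp add: sqnorm_def sum_distrib_left)
  also have "\<dots> \<le> (cmod (d i0))\<^sup>2"
    using x by (simp add: mult_left_le)
  finally show "y \<le> cmod (d i0)"
    unfolding y cvnorm_sqnorm using real_sqrt_le_mono by fastforce
qed

lemma mult_adj_eq_mat_mul: "mult_adj k Z = mat_mul k Z (mat_adjoint Z)"
  by (simp add: mult_adj_def mat_mul_def mat_adjoint_def)

lemma sqrt_opnorm_mult_adj:
  assumes Z: "Z \<in> mats k k" and U: "unitary k U" and W: "unitary k W"
    and D: "mat_mul k (mat_mul k (mat_adjoint U) Z) W = diag_mat k (\<lambda>i. of_real (s i))"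
    and s: "\<And>i. 0 \<le> s i" and i0: "i0 < k" and max: "\<And>i. i < k \<Longrightarrow> s i \<le> s i0"
  shows "sqrt (opnorm k (mult_adj k Z)) = s i0"
proof -
  let ?D = "diag_mat k (\<lambda>i. of_real (s i))"
  have "mat_mul k U (mat_mul k ?D (mat_adjoint W))
      = mat_mul k (mat_mul k U (mat_adjoint U)) (mat_mul k Z (mat_mul k W (mat_adjoint W)))"
    unfolding D[symmetric] by (simp only: mat_mul_assoc)
  then have "Z = mat_mul k U (mat_mul k ?D (mat_adjoint W))"
    using U W Z by (simp add: unitary_def mat_mul_one_left mat_mul_one_right)
  then have "mult_adj k Z
      = mat_mul k U (mat_mul k (mat_mul k ?D (mat_mul k (mat_mul k (mat_adjoint W) W) (mat_adjoint ?D)))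
          (mat_adjoint U))"
    by (simp add: mult_adj_eq_mat_mul mat_adjoint_mat_mul mat_mul_assoc)
  also have "\<dots> = mat_mul k U (mat_mul k (diag_mat k (\<lambda>i. (of_real (s i))\<^sup>2)) (mat_adjoint U))"
    using W by (simp add: unitary_def mat_mul_one_left mats_diag_mat mat_adjoint_diag_mat
        mat_mul_diag_diag power2_eq_square)
  finally have adj: "mult_adj k Z
      = mat_mul k U (mat_mul k (diag_mat k (\<lambda>i. (of_real (s i))\<^sup>2)) (mat_adjoint U))" .
  have "opnorm k (diag_mat k (\<lambda>i. (of_real (s i))\<^sup>2)) = (s i0)\<^sup>2"
    by (subst opnorm_diag_mat[OF i0]) (use s max in \<open>auto simp: norm_power power_mono\<close>)
  then have "opnorm k (mult_adj k Z) = (s i0)\<^sup>2"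
    by (simp add: adj opnorm_unitary_conj[OF U])
  then show ?thesis
    using s by simp
qed

section \<open>Regrouping the blocks of \<open>[I\<^sub>k \<otimes> a, Z \<otimes> b; 0, I\<^sub>k \<otimes> c]\<close>\<close>

text \<open>Row and column \<open>u < n + m\<close> of the \<open>j\<close>-th copy of \<open>[a, b; 0, c]\<close> sit at position
  \<open>block_index k n m j u\<close> of the \<open>(k n + k m)\<close>-square block matrix: the rows of \<open>a\<close> among the first
  \<open>k n\<close> indices, those of \<open>c\<close> among the last \<open>k m\<close>.\<close>

definition block_index :: "nat \<Rightarrow> nat \<Rightarrow> nat \<Rightarrow> nat \<Rightarrow> nat \<Rightarrow> nat" where
  "block_index k n m j u = (if u < n then j * n + u else k * n + (j * m + (u - n)))"

definition block_of :: "nat \<Rightarrow> nat \<Rightarrow> nat \<Rightarrow> nat \<Rightarrow> nat" where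
  "block_of k n m c = (if c < k * n then c div n else (c - k * n) div m)"

definition pos_of :: "nat \<Rightarrow> nat \<Rightarrow> nat \<Rightarrow> nat \<Rightarrow> nat" where
  "pos_of k n m c = (if c < k * n then c mod n else n + (c - k * n) mod m)"

lemma mult_add_less: "j < k \<Longrightarrow> u < (n::nat) \<Longrightarrow> j * n + u < k * n"
proof -
  assume "j < k" "u < n"
  then have "j * n + u < Suc j * n"
    by simp
  also have "\<dots> \<le> k * n"
    using \<open>j < k\<close> by (intro mult_le_mono1) simp
  finally show ?thesis .
qed

lemma block_index_split:
  assumes "u < n + m"
  obtains "u < n" "block_index k n m j u = j * n + u"
    | q where "q < m" "u = n + q" "block_index k n m j u = k * n + (j * m + q)"
proof (cases "u < n")
  case True
  then show ?thesis
    using that(1) by (simp add: block_index_def)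
next
  case False
  then show ?thesis
    using that(2)[of "u - n"] assms by (simp add: block_index_def)
qed

lemma block_index_less:
  assumes "j < k" "u < n + m"
  shows "block_index k n m j u < k * n + k * m"
proof (rule block_index_split[OF assms(2)])
  assume "u < n" "block_index k n m j u = j * n + u"
  then show ?thesis
    using mult_add_less[OF assms(1), of u n] by simp
next
  fix q assume "q < m" "block_index k n m j u = k * n + (j * m + q)"
  then show ?thesis
    using mult_add_less[OF assms(1), of q m] by simp
qed

lemma block_index_inverse:
  assumes "j < k" "u < n + m"
  shows "block_of k n m (block_index k n m j u) = j \<and> pos_of k n m (block_index k n m j u) = u"
proof (rule block_index_split[OF assms(2)])
  assume "u < n" "block_index k n m j u = j * n + u"
  then show ?thesis
    using mult_add_less[OF assms(1), of u n] by (simp add: block_of_def pos_of_def)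
next
  fix q assume "q < m" "u = n + q" "block_index k n m j u = k * n + (j * m + q)"
  then show ?thesis
    by (simp add: block_of_def pos_of_def)
qed

lemma block_index_eq_iff:
  "j < k \<Longrightarrow> u < n + m \<Longrightarrow> j' < k \<Longrightarrow> u' < n + m \<Longrightarrow>
    block_index k n m j u = block_index k n m j' u' \<longleftrightarrow> j = j' \<and> u = u'"
  by (metis block_index_inverse)

lemma block_index_cases:
  assumes "c < k * n + k * m"
  obtains j u where "j < k" "u < n + m" "c = block_index k n m j u"
proof (cases "c < k * n")
  case True
  then have "0 < n"
    by (cases n) auto
  then have "c mod n < n"
    by simp
  then show ?thesis
    using that[of "c div n" "c mod n"] True less_mult_imp_div_less[of c k n]
    by (simp add: block_index_def)
next
  case False
  define c' where "c' = c - k * n"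
  have c': "c' < k * m" "c = k * n + c'"
    using False assms by (simp_all add: c'_def)
  then have "0 < m"
    by (cases m) auto
  then have "c' mod m < m"
    by simp
  then show ?thesis
    using that[of "c' div m" "n + c' mod m"] c' less_mult_imp_div_less[of c' k m]
    by (simp add: block_index_def)
qed

lemma sum_block_index:
  "(\<Sum>c<k * n + k * m. f c) = (\<Sum>j<k. \<Sum>u<n + m. f (block_index k n m j u))"
proof -
  have "bij_betw (\<lambda>(j, u). block_index k n m j u) ({..<k} \<times> {..<n + m}) {..<k * n + k * m}"
  proof (rule bij_betw_imageI)
    show "inj_on (\<lambda>(j, u). block_index k n m j u) ({..<k} \<times> {..<n + m})"
      by (auto simp: inj_on_def block_index_eq_iff)
    show "(\<lambda>(j, u). block_index k n m j u) ` ({..<k} \<times> {..<n + m}) = {..<k * n + k * m}"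
      by (auto simp: block_index_less elim!: block_index_cases)
  qed
  then show ?thesis
    by (simp add: sum.cartesian_product sum.reindex_bij_betw[symmetric] case_prod_beta')
qed

lemma sum_block_rows:
  fixes k n m :: nat
  shows "(\<Sum>r<k * n + k * m. f r) = (\<Sum>i<k. \<Sum>u<n + m. f (i * (n + m) + u))"
proof -
  have "(\<Sum>u<n + m. f (i * (n + m) + u)) = sum f {i * (n + m)..<i * (n + m) + (n + m)}" for i
    using sum.shift_bounds_nat_ivl[of f 0 "i * (n + m)" "n + m"] by (simp add: atLeast0LessThan add.commute)
  then have "(\<Sum>i<k. \<Sum>u<n + m. f (i * (n + m) + u)) = (\<Sum>i<k. sum f {i * (n + m)..<i * (n + m) + (n + m)})"
    by simp
  also have "\<dots> = (\<Sum>r<k * n + k * m. f r)"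
    using sum.nat_group[where g = f and k = "n + m" and n = k] by (simp add: distrib_left)
  finally show ?thesis ..
qed

lemma row_index_less:
  fixes i k n m :: nat
  shows "i < k \<Longrightarrow> u < n + m \<Longrightarrow> i * (n + m) + u < k * n + k * m"
  using mult_add_less[of i k u "n + m"] by (simp add: distrib_left)

lemma row_index_eq_iff:
  fixes n m :: nat
  assumes "u < n + m" "u' < n + m"
  shows "i * (n + m) + u = i' * (n + m) + u' \<longleftrightarrow> i = i' \<and> u = u'"
proof
  assume eq: "i * (n + m) + u = i' * (n + m) + u'"
  have "0 < n + m"
    using assms(1) by linarith
  then have "i = (i * (n + m) + u) div (n + m)" "u = (i * (n + m) + u) mod (n + m)"
    and "i' = (i' * (n + m) + u') div (n + m)" "u' = (i' * (n + m) + u') mod (n + m)"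
    using assms by simp_all
  then show "i = i' \<and> u = u'"
    using eq by metis
qed simp

lemma row_index_cases:
  assumes "r < k * n + k * (m::nat)"
  obtains i u where "i < k" "u < n + m" "r = i * (n + m) + u"
proof -
  have "r div (n + m) < k"
    using assms by (intro less_mult_imp_div_less) (simp add: distrib_left)
  moreover have "r mod (n + m) < n + m"
    using assms by (cases "n + m") auto
  ultimately show ?thesis
    using that[of "r div (n + m)" "r mod (n + m)"] div_mult_mod_eq[of r "n + m"] by simp
qed

text \<open>\<open>regroup k n m U W\<close> first applies \<open>U\<^sup>* \<otimes> I\<^sub>n \<oplus> W\<^sup>* \<otimes> I\<^sub>m\<close> and then moves position
  \<open>block_index k n m j u\<close> to \<open>j (n + m) + u\<close>.  If \<open>U\<^sup>* Z W = diag d\<close>, conjugating by it makes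
  \<open>[I\<^sub>k \<otimes> a, Z \<otimes> b; 0, I\<^sub>k \<otimes> c]\<close> block diagonal with blocks \<open>[a, d\<^sub>j b; 0, c]\<close>.\<close>

definition regroup :: "nat \<Rightarrow> nat \<Rightarrow> nat \<Rightarrow> (nat \<Rightarrow> nat \<Rightarrow> complex) \<Rightarrow> (nat \<Rightarrow> nat \<Rightarrow> complex)
    \<Rightarrow> nat \<Rightarrow> nat \<Rightarrow> complex" where
  "regroup k n m U W r c = (if r < k * n + k * m \<and> c < k * n + k * m \<and> r mod (n + m) = pos_of k n m c
     then cnj ((if pos_of k n m c < n then U else W) (block_of k n m c) (r div (n + m))) else 0)"

lemma regroup_at:
  assumes "i < k" "u < n + m" "j < k" "u' < n + m"
  shows "regroup k n m U W (i * (n + m) + u) (block_index k n m j u')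
    = (if u' = u then cnj ((if u < n then U else W) j i) else 0)"
  using assms block_index_inverse[of j k u' n m] block_index_inverse[of j k u n m]
  by (simp add: regroup_def block_index_less row_index_less)

lemma mat_mul_regroup_adjoint:
  assumes U: "unitary k U" and W: "unitary k W"
  shows "mat_mul (k * n + k * m) (regroup k n m U W) (mat_adjoint (regroup k n m U W))
    = mat_one (k * n + k * m)"
proof (intro ext)
  fix r r'
  let ?V = "regroup k n m U W"
  let ?N = "k * n + k * m"
  show "mat_mul ?N ?V (mat_adjoint ?V) r r' = mat_one ?N r r'"
  proof (cases "r < ?N \<and> r' < ?N")
    case True
    then obtain i u i' u' where iu: "i < k" "u < n + m" "r = i * (n + m) + u"
      and iu': "i' < k" "u' < n + m" "r' = i' * (n + m) + u'"
      by (metis row_index_cases)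
    let ?Q = "if u < n then U else W"
    have "(\<Sum>u1<n + m. ?V r (block_index k n m j u1) * cnj (?V r' (block_index k n m j u1)))
        = (if u = u' then cnj (?Q j i) * ?Q j i' else 0)" if "j < k" for j
    proof -
      have "(\<Sum>u1<n + m. ?V r (block_index k n m j u1) * cnj (?V r' (block_index k n m j u1)))
          = (\<Sum>u1<n + m. if u1 = u then (if u = u' then cnj (?Q j i) * ?Q j i' else 0) else 0)"
        using iu iu' that by (intro sum.cong) (auto simp: regroup_at)
      then show ?thesis
        using iu by simp
    qed
    then have "mat_mul ?N ?V (mat_adjoint ?V) r r' = (if u = u' then \<Sum>j<k. cnj (?Q j i) * ?Q j i' else 0)"
      by (simp add: mat_mul_def mat_adjoint_def sum_block_index)
    also have "\<dots> = (if u = u' \<and> i = i' then 1 else 0)"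
      using U W iu iu' by (simp add: unitary_orthonormal_cols)
    also have "\<dots> = mat_one ?N r r'"
      using True iu iu' by (simp add: diag_mat_def row_index_eq_iff)
    finally show ?thesis .
  next
    case False
    then show ?thesis
      by (auto simp: mat_mul_def mat_adjoint_def regroup_def diag_mat_def)
  qed
qed

lemma mat_mul_adjoint_regroup:
  assumes U: "unitary k U" and W: "unitary k W"
  shows "mat_mul (k * n + k * m) (mat_adjoint (regroup k n m U W)) (regroup k n m U W)
    = mat_one (k * n + k * m)"
proof (intro ext)
  fix c c'
  let ?V = "regroup k n m U W"
  let ?N = "k * n + k * m"
  show "mat_mul ?N (mat_adjoint ?V) ?V c c' = mat_one ?N c c'"
  proof (cases "c < ?N \<and> c' < ?N")
    case True
    then obtain j u j' u' where ju: "j < k" "u < n + m" "c = block_index k n m j u"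
      and ju': "j' < k" "u' < n + m" "c' = block_index k n m j' u'"
      by (metis block_index_cases)
    let ?Q = "if u < n then U else W"
    have "(\<Sum>u1<n + m. cnj (?V (i * (n + m) + u1) c) * ?V (i * (n + m) + u1) c')
        = (if u = u' then ?Q j i * cnj (?Q j' i) else 0)" if "i < k" for i
    proof -
      have "(\<Sum>u1<n + m. cnj (?V (i * (n + m) + u1) c) * ?V (i * (n + m) + u1) c')
          = (\<Sum>u1<n + m. if u1 = u then (if u = u' then ?Q j i * cnj (?Q j' i) else 0) else 0)"
        using ju ju' that by (intro sum.cong) (auto simp: regroup_at)
      then show ?thesis
        using ju by simp
    qed
    then have "mat_mul ?N (mat_adjoint ?V) ?V c c' = (if u = u' then \<Sum>i<k. ?Q j i * cnj (?Q j' i) else 0)"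
      by (simp add: mat_mul_def mat_adjoint_def sum_block_rows)
    also have "\<dots> = (if u = u' \<and> j = j' then 1 else 0)"
      using U W ju ju' by (simp add: unitary_orthonormal_rows)
    also have "\<dots> = mat_one ?N c c'"
      using True ju ju' by (auto simp: diag_mat_def block_index_eq_iff)
    finally show ?thesis .
  next
    case False
    then show ?thesis
      by (auto simp: mat_mul_def mat_adjoint_def regroup_def diag_mat_def)
  qed
qed

lemma unitary_regroup: "unitary k U \<Longrightarrow> unitary k W \<Longrightarrow> unitary (k * n + k * m) (regroup k n m U W)"
  by (simp add: unitary_def mat_mul_regroup_adjoint mat_mul_adjoint_regroup)
    (simp add: mats_def regroup_def)

lemma sum_swap_pairs:
  "(\<Sum>p\<in>P. \<Sum>q\<in>Q. \<Sum>p'\<in>P'. \<Sum>q'\<in>Q'. f p q p' q')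
    = (\<Sum>p'\<in>P'. \<Sum>q'\<in>Q'. \<Sum>p\<in>P. \<Sum>q\<in>Q. f p q p' q')"
proof -
  have "(\<Sum>p\<in>P. \<Sum>q\<in>Q. \<Sum>p'\<in>P'. \<Sum>q'\<in>Q'. f p q p' q')
      = (\<Sum>p\<in>P. \<Sum>p'\<in>P'. \<Sum>q\<in>Q. \<Sum>q'\<in>Q'. f p q p' q')"
    by (rule sum.cong[OF refl], rule sum.swap)
  also have "\<dots> = (\<Sum>p'\<in>P'. \<Sum>p\<in>P. \<Sum>q'\<in>Q'. \<Sum>q\<in>Q. f p q p' q')"
    by (subst sum.swap) (simp only: sum.swap[of _ Q Q'])
  also have "\<dots> = (\<Sum>p'\<in>P'. \<Sum>q'\<in>Q'. \<Sum>p\<in>P. \<Sum>q\<in>Q. f p q p' q')"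
    by (rule sum.cong[OF refl], rule sum.swap)
  finally show ?thesis .
qed

lemma conj_by_conj_by:
  assumes "vector_space sc"
  shows "conj_by sc N V (conj_by sc N U A) = conj_by sc N (mat_mul N V U) A"
proof (intro ext)
  interpret vector_space sc by fact
  fix i j
  show "conj_by sc N V (conj_by sc N U A) i j = conj_by sc N (mat_mul N V U) A i j"
  proof (cases "i < N \<and> j < N")
    case True
    have "conj_by sc N V (conj_by sc N U A) i j
        = (\<Sum>p<N. \<Sum>q<N. \<Sum>p'<N. \<Sum>q'<N. sc ((V i p * U p p') * cnj (V j q * U q q')) (A p' q'))"
      using True by (simp add: conj_by_def scale_sum_right mult_ac)
    also have "\<dots> = (\<Sum>p'<N. \<Sum>q'<N. \<Sum>p<N. \<Sum>q<N. sc ((V i p * U p p') * cnj (V j q * U q q')) (A p' q'))"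
      by (rule sum_swap_pairs)
    also have "\<dots> = conj_by sc N (mat_mul N V U) A i j"
      using True by (simp add: conj_by_def mat_mul_def scale_sum_left sum_product cnj_sum)
    finally show ?thesis .
  qed (auto simp: conj_by_def)
qed

lemma conj_by_mat_one:
  assumes "vector_space sc" "A \<in> mats N N"
  shows "conj_by sc N (mat_one N) A = A"
proof (intro ext)
  interpret vector_space sc by fact
  fix i j
  have "sc ((if i = p then 1 else 0) * cnj (if j = q then 1 else 0)) (A p q)
      = (if q = j then (if p = i then A p q else 0) else 0)" for p q
    by simp
  then show "conj_by sc N (mat_one N) A i j = A i j"
    using assms(2) by (cases "i < N \<and> j < N") (auto simp: conj_by_def diag_mat_def mats_def)
qed

lemma unitary_imp_unitary_mat: "unitary N V \<Longrightarrow> unitary_mat N V"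
  by (auto simp: unitary_def unitary_mat_def mat_mul_def mat_adjoint_def diag_mat_def fun_eq_iff
      dest!: conjunct1[OF conjunct2])

lemma conj_by_unitary_in_iff:
  assumes "vector_space sc" "P2 sc D" "1 \<le> N" "unitary N V" "X \<in> mats N N"
  shows "conj_by sc N V X \<in> D N \<longleftrightarrow> X \<in> D N"
proof
  assume "conj_by sc N V X \<in> D N"
  then have "conj_by sc N (mat_adjoint V) (conj_by sc N V X) \<in> D N"
    using assms(2-4) unitary_imp_unitary_mat[OF unitary_mat_adjoint] unfolding P2_def by blast
  then show "X \<in> D N"
    using assms(1,4,5) by (simp add: conj_by_conj_by conj_by_mat_one unitary_def)
next
  assume "X \<in> D N"
  then show "conj_by sc N V X \<in> D N"
    using assms(2-4) unitary_imp_unitary_mat unfolding P2_def by blast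
qed

lemma conj_by_regroup:
  assumes "vector_space sc" and iu: "i < k" "u < n + m" and iu': "i' < k" "u' < n + m"
  shows "conj_by sc (k * n + k * m) (regroup k n m U W) X (i * (n + m) + u) (i' * (n + m) + u')
    = (\<Sum>j<k. \<Sum>j'<k. sc (cnj ((if u < n then U else W) j i) * (if u' < n then U else W) j' i')
        (X (block_index k n m j u) (block_index k n m j' u')))"
proof -
  interpret vector_space sc by fact
  let ?V = "regroup k n m U W"
  let ?r = "i * (n + m) + u" and ?r' = "i' * (n + m) + u'"
  let ?t = "\<lambda>j j'. sc (cnj ((if u < n then U else W) j i) * (if u' < n then U else W) j' i') (X (block_index k n m j u) (block_index k n m j' u'))"
  have inner: "(\<Sum>j'<k. \<Sum>u1'<n + m. sc (?V ?r (block_index k n m j u1) * cnj (?V ?r' (block_index k n m j' u1')))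
        (X (block_index k n m j u1) (block_index k n m j' u1')))
      = (if u1 = u then \<Sum>j'<k. ?t j j' else 0)" if "j < k" "u1 < n + m" for j u1
  proof -
    have "sc (?V ?r (block_index k n m j u1) * cnj (?V ?r' (block_index k n m j' u1')))
          (X (block_index k n m j u1) (block_index k n m j' u1'))
        = (if u1' = u' then (if u1 = u then ?t j j' else 0) else 0)"
      if "j' < k" "u1' < n + m" for j' u1'
      using that \<open>j < k\<close> \<open>u1 < n + m\<close> iu iu' by (simp add: regroup_at)
    then have "(\<Sum>j'<k. \<Sum>u1'<n + m. sc (?V ?r (block_index k n m j u1) * cnj (?V ?r' (block_index k n m j' u1')))
        (X (block_index k n m j u1) (block_index k n m j' u1')))
      = (\<Sum>j'<k. \<Sum>u1'<n + m. if u1' = u' then (if u1 = u then ?t j j' else 0) else 0)"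
      by (intro sum.cong refl) simp
    then show ?thesis
      using iu' by (cases "u1 = u") simp_all
  qed
  have "conj_by sc (k * n + k * m) ?V X ?r ?r'
      = (\<Sum>j<k. \<Sum>u1<n + m. \<Sum>j'<k. \<Sum>u1'<n + m.
          sc (?V ?r (block_index k n m j u1) * cnj (?V ?r' (block_index k n m j' u1')))
            (X (block_index k n m j u1) (block_index k n m j' u1')))"
    using iu iu' by (simp add: conj_by_def sum_block_index row_index_less)
  also have "\<dots> = (\<Sum>j<k. \<Sum>u1<n + m. if u1 = u then \<Sum>j'<k. ?t j j' else 0)"
    using inner by (intro sum.cong) simp_all
  also have "\<dots> = (\<Sum>j<k. \<Sum>j'<k. ?t j j')"
    using iu by simp
  finally show ?thesis .
qed

lemma upper_kron_at:
  assumes "vector_space sc" and ju: "j < k" "u < n + m" and ju': "j' < k" "u' < n + m"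
  shows "upper (k * n) (k * m) (kron_id k n a) (\<lambda>p q. sc t (kron sc k n m Z b p q)) (kron_id k m c)
      (block_index k n m j u) (block_index k n m j' u')
    = upper n m (\<lambda>p q. if j = j' then a p q else 0) (\<lambda>p q. sc (t * Z j j') (b p q))
      (\<lambda>p q. if j = j' then c p q else 0) u u'"
proof -
  interpret vector_space sc by fact
  show ?thesis
  proof (rule block_index_split[OF ju(2)]; rule block_index_split[OF ju'(2)])
    assume "u < n" "u' < n" "block_index k n m j u = j * n + u" "block_index k n m j' u' = j' * n + u'"
    then show ?thesis
      using mult_add_less[OF ju(1), of u n] mult_add_less[OF ju'(1), of u' n]
      by (simp add: upper_def kron_id_def)
  next
    fix q' assume "u < n" "q' < m" "u' = n + q'" "block_index k n m j u = j * n + u"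
      "block_index k n m j' u' = k * n + (j' * m + q')"
    then show ?thesis
      using mult_add_less[OF ju(1), of u n] mult_add_less[OF ju'(1), of q' m]
      by (simp add: upper_def kron_def)
  next
    fix q assume "q < m" "u = n + q" "block_index k n m j u = k * n + (j * m + q)"
      "u' < n" "block_index k n m j' u' = j' * n + u'"
    then show ?thesis
      using mult_add_less[OF ju'(1), of u' n]
      by (simp add: upper_def)
  next
    fix q q' assume "q < m" "u = n + q" "block_index k n m j u = k * n + (j * m + q)"
      "q' < m" "u' = n + q'" "block_index k n m j' u' = k * n + (j' * m + q')"
    then show ?thesis
      using mult_add_less[OF ju(1), of q m] mult_add_less[OF ju'(1), of q' m]
      by (simp add: upper_def kron_id_def)
  qed
qed

section \<open>Block diagonal matrices and membership in \<open>D\<close>\<close>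

definition block_diag :: "nat \<Rightarrow> nat \<Rightarrow> (nat \<Rightarrow> nat \<Rightarrow> nat \<Rightarrow> 'a::zero) \<Rightarrow> nat \<Rightarrow> nat \<Rightarrow> 'a" where
  "block_diag N k B = (\<lambda>r r'. if r < k * N \<and> r' < k * N \<and> r div N = r' div N
     then B (r div N) (r mod N) (r' mod N) else 0)"

lemma block_diag_at:
  "i < k \<Longrightarrow> i' < k \<Longrightarrow> u < N \<Longrightarrow> u' < N \<Longrightarrow>
    block_diag N k B (i * N + u) (i' * N + u') = (if i = i' then B i u u' else 0)"
  using mult_add_less[of i k u N] mult_add_less[of i' k u' N] by (simp add: block_diag_def)

lemma sum_unitary_delta_scale:
  assumes "vector_space sc" "unitary k Q" "i < k" "i' < k"
  shows "(\<Sum>j<k. \<Sum>j'<k. sc (cnj (Q j i) * Q j' i') (if j = j' then x else 0)) = (if i = i' then x else 0)"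
proof -
  interpret vector_space sc by fact
  have "(\<Sum>j<k. \<Sum>j'<k. sc (cnj (Q j i) * Q j' i') (if j = j' then x else 0))
      = sc (\<Sum>j<k. cnj (Q j i) * Q j i') x"
    by (simp add: if_distrib[of "sc _"] scale_sum_left cong: if_cong)
  then show ?thesis
    using assms(2-4) by (simp add: unitary_orthonormal_cols)
qed

lemma sum_scale_mat_mul:
  assumes "vector_space sc"
  shows "(\<Sum>j<k. \<Sum>j'<k. sc (cnj (U j i) * W j' i' * (t * Z j j')) y)
    = sc (t * mat_mul k (mat_mul k (mat_adjoint U) Z) W i i') y"
proof -
  interpret vector_space sc by fact
  have "(\<Sum>j<k. \<Sum>j'<k. cnj (U j i) * W j' i' * (t * Z j j'))
      = t * (\<Sum>j'<k. (\<Sum>j<k. cnj (U j i) * Z j j') * W j' i')"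
    by (subst sum.swap) (simp add: sum_distrib_left sum_distrib_right mult_ac)
  then show ?thesis
    by (simp add: scale_sum_left[symmetric] mat_mul_def mat_adjoint_def)
qed

lemma conj_by_regroup_upper_kron:
  assumes vs: "vector_space sc" and U: "unitary k U" and W: "unitary k W"
    and diag: "mat_mul k (mat_mul k (mat_adjoint U) Z) W = diag_mat k d"
  shows "conj_by sc (k * n + k * m) (regroup k n m U W)
      (upper (k * n) (k * m) (kron_id k n a) (\<lambda>p q. sc t (kron sc k n m Z b p q)) (kron_id k m c))
    = block_diag (n + m) k (\<lambda>i. upper n m a (\<lambda>p q. sc (t * d i) (b p q)) c)"
proof (intro ext)
  interpret vector_space sc by fact
  fix r r'
  let ?N = "k * n + k * m"
  let ?B = "\<lambda>i. upper n m a (\<lambda>p q. sc (t * d i) (b p q)) c"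
  show "conj_by sc ?N (regroup k n m U W)
      (upper (k * n) (k * m) (kron_id k n a) (\<lambda>p q. sc t (kron sc k n m Z b p q)) (kron_id k m c)) r r'
    = block_diag (n + m) k ?B r r'"
  proof (cases "r < ?N \<and> r' < ?N")
    case True
    then obtain i u i' u' where iu: "i < k" "u < n + m" "r = i * (n + m) + u"
      and iu': "i' < k" "u' < n + m" "r' = i' * (n + m) + u'"
      by (metis row_index_cases)
    have "conj_by sc ?N (regroup k n m U W)
        (upper (k * n) (k * m) (kron_id k n a) (\<lambda>p q. sc t (kron sc k n m Z b p q)) (kron_id k m c)) r r'
      = (\<Sum>j<k. \<Sum>j'<k. sc (cnj ((if u < n then U else W) j i) * (if u' < n then U else W) j' i')
          (upper n m (\<lambda>p q. if j = j' then a p q else 0) (\<lambda>p q. sc (t * Z j j') (b p q))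
            (\<lambda>p q. if j = j' then c p q else 0) u u'))"
      using iu iu' by (simp add: conj_by_regroup[OF vs] upper_kron_at[OF vs])
    also have "\<dots> = (if i = i' then ?B i u u' else 0)"
      using iu iu' U W diag
      by (cases "u < n"; cases "u' < n")
        (simp_all add: upper_def sum_unitary_delta_scale[OF vs] sum_scale_mat_mul[OF vs] diag_mat_def)
    also have "\<dots> = block_diag (n + m) k ?B r r'"
      using iu iu' by (simp add: block_diag_at)
    finally show ?thesis .
  next
    case False
    then show ?thesis
      by (auto simp: conj_by_def block_diag_def distrib_left)
  qed
qed

lemma upper_scale_zero_in:
  assumes "vector_space sc" "nc_set D" "1 \<le> n" "1 \<le> m" "a \<in> D n" "c \<in> D m"
  shows "upper n m a (\<lambda>i j. sc 0 (b i j)) c \<in> D (n + m)"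
proof -
  interpret vector_space sc by fact
  show ?thesis
    using assms(2-6) by (simp add: nc_set_def dsum_def)
qed

lemma block_diag_Suc:
  assumes "0 < N" "B 0 \<in> mats N N"
  shows "block_diag N (Suc k) B = dsum N (k * N) (B 0) (block_diag N k (\<lambda>i. B (Suc i)))"
proof (intro ext)
  fix r r'
  have shift: "x div N = Suc ((x - N) div N)" "x mod N = (x - N) mod N" if "\<not> x < N" for x
    using that assms(1) by (simp_all add: le_div_geq le_mod_geq)
  have bound: "x < Suc k * N \<longleftrightarrow> x - N < k * N" if "\<not> x < N" for x
    using that by auto
  show "block_diag N (Suc k) B r r' = dsum N (k * N) (B 0) (block_diag N k (\<lambda>i. B (Suc i))) r r'"
  proof (cases "r < N"; cases "r' < N")
    assume "r < N" "r' < N"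
    then show ?thesis
      by (simp add: block_diag_def dsum_def upper_def)
  next
    assume "r < N" "\<not> r' < N"
    then have "r div N \<noteq> r' div N"
      using shift[of r'] by simp
    then show ?thesis
      using \<open>r < N\<close> \<open>\<not> r' < N\<close> by (simp add: block_diag_def dsum_def upper_def)
  next
    assume "\<not> r < N" "r' < N"
    then have "r div N \<noteq> r' div N"
      using shift[of r] by simp
    then show ?thesis
      using \<open>\<not> r < N\<close> \<open>r' < N\<close> by (simp add: block_diag_def dsum_def upper_def)
  next
    assume "\<not> r < N" "\<not> r' < N"
    then show ?thesis
      using shift[of r] shift[of r'] bound[of r] bound[of r']
      by (simp add: block_diag_def dsum_def upper_def)
  qed
qed

lemma block_diag_in_iff:
  assumes nc: "nc_set D" and P3: "P3 D" and N: "1 \<le> N" and B: "\<And>i. B i \<in> mats N N" and k: "1 \<le> k"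
  shows "block_diag N k B \<in> D (k * N) \<longleftrightarrow> (\<forall>i<k. B i \<in> D N)"
  using k B
proof (induction k arbitrary: B rule: nat_induct_at_least)
  case base
  have "block_diag N 1 B = B 0"
    using base.prems[of 0] by (auto simp: block_diag_def mats_def fun_eq_iff)
  then show ?case
    by simp
next
  case (Suc k)
  let ?R = "block_diag N k (\<lambda>i. B (Suc i))"
  have kN: "1 \<le> k * N"
    using Suc.hyps N by simp
  have R: "?R \<in> mats (k * N) (k * N)"
    by (simp add: block_diag_def mats_def)
  have "block_diag N (Suc k) B = dsum N (k * N) (B 0) ?R"
    using N Suc.prems by (intro block_diag_Suc) auto
  then have "block_diag N (Suc k) B \<in> D (Suc k * N) \<longleftrightarrow> dsum N (k * N) (B 0) ?R \<in> D (N + k * N)"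
    by simp
  also have "\<dots> \<longleftrightarrow> B 0 \<in> D N \<and> ?R \<in> D (k * N)"
    using nc P3 N kN R Suc.prems unfolding nc_set_def P3_def by blast
  also have "\<dots> \<longleftrightarrow> (\<forall>i<Suc k. B i \<in> D N)"
    using Suc.IH[of "\<lambda>i. B (Suc i)"] Suc.prems by (auto simp: less_Suc_eq_0_disj)
  finally show ?case .
qed

section \<open>Admissible scalings\<close>

definition admissible :: "(real \<Rightarrow> bool) \<Rightarrow> ennreal set" where
  "admissible G = {t. \<forall>s. 0 \<le> s \<and> ennreal s \<le> t \<longrightarrow> G s}"

definition radius :: "(real \<Rightarrow> bool) \<Rightarrow> ennreal" where
  "radius G = Sup (admissible G)"

lemma delta_eq_inverse_radius:
  "delta sc D n m a c b = inverse (radius (\<lambda>s. upper n m a (\<lambda>i j. sc (of_real s) (b i j)) c \<in> D (n + m)))"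
  by (simp add: delta_def radius_def admissible_def)

lemma admissible_scaled_eq_max:
  assumes "i0 \<in> I" and \<sigma>: "\<And>i. i \<in> I \<Longrightarrow> 0 \<le> \<sigma> i \<and> \<sigma> i \<le> \<sigma> i0"
  shows "admissible (\<lambda>s. \<forall>i\<in>I. G (s * \<sigma> i)) = admissible (\<lambda>s. G (s * \<sigma> i0))"
proof -
  have "G (s * \<sigma> i)" if t: "\<forall>s. 0 \<le> s \<and> ennreal s \<le> t \<longrightarrow> G (s * \<sigma> i0)"
    and s: "0 \<le> s" "ennreal s \<le> t" and i: "i \<in> I" for t s i
  proof (cases "\<sigma> i0 = 0")
    case True
    then show ?thesis
      using t \<sigma>[OF i] by (metis ennreal_0 le_zero_eq mult_zero_right order.antisym zero_le)
  next
    case False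
    then have "0 < \<sigma> i0"
      using \<sigma>[OF \<open>i0 \<in> I\<close>] by simp
    define s' where "s' = s * \<sigma> i / \<sigma> i0"
    have "0 \<le> s'" "s' \<le> s"
      using s \<sigma>[OF i] \<open>0 < \<sigma> i0\<close> by (auto simp: s'_def field_simps mult_left_mono)
    then have "G (s' * \<sigma> i0)"
      using t s by (meson ennreal_leI order.trans)
    then show ?thesis
      using \<open>0 < \<sigma> i0\<close> by (simp add: s'_def)
  qed
  then show ?thesis
    unfolding admissible_def using assms(1) by (metis (no_types, lifting))
qed

lemma admissible_scaled_iff:
  assumes \<sigma>: "0 < \<sigma>"
  shows "t \<in> admissible (\<lambda>s. G (s * \<sigma>)) \<longleftrightarrow> t * ennreal \<sigma> \<in> admissible G"
proof
  assume t: "t \<in> admissible (\<lambda>s. G (s * \<sigma>))"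
  show "t * ennreal \<sigma> \<in> admissible G"
    unfolding admissible_def
  proof (intro CollectI allI impI)
    fix r :: real assume r: "0 \<le> r \<and> ennreal r \<le> t * ennreal \<sigma>"
    have "ennreal \<sigma> * ennreal (r / \<sigma>) \<le> ennreal \<sigma> * t"
      using \<sigma> r by (simp add: ennreal_mult[symmetric] mult.commute)
    then have "ennreal (r / \<sigma>) \<le> t"
      using \<sigma> by (subst (asm) ennreal_mult_le_mult_iff) auto
    moreover have "0 \<le> r / \<sigma>"
      using \<sigma> r by simp
    ultimately have "G (r / \<sigma> * \<sigma>)"
      using t unfolding admissible_def by blast
    then show "G r"
      using \<sigma> by simp
  qed
next
  assume t\<sigma>: "t * ennreal \<sigma> \<in> admissible G"
  show "t \<in> admissible (\<lambda>s. G (s * \<sigma>))"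
    unfolding admissible_def
  proof (intro CollectI allI impI)
    fix s :: real assume s: "0 \<le> s \<and> ennreal s \<le> t"
    then have "ennreal (s * \<sigma>) \<le> t * ennreal \<sigma>"
      using \<sigma> by (simp add: ennreal_mult mult_right_mono)
    then show "G (s * \<sigma>)"
      using t\<sigma> s \<sigma> by (simp add: admissible_def)
  qed
qed

lemma radius_scaled:
  assumes \<sigma>: "0 < \<sigma>"
  shows "radius (\<lambda>s. G (s * \<sigma>)) = radius G * ennreal (1 / \<sigma>)"
proof -
  define c where "c = ennreal (1 / \<sigma>)"
  have c: "ennreal \<sigma> * c = 1"
    using \<sigma> by (simp add: c_def ennreal_mult[symmetric])
  have "admissible (\<lambda>s. G (s * \<sigma>)) = (\<lambda>u. u * c) ` admissible G"
  proof (intro equalityI subsetI)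
    fix t assume "t \<in> admissible (\<lambda>s. G (s * \<sigma>))"
    moreover have "t = t * ennreal \<sigma> * c"
      by (simp add: mult.assoc c)
    ultimately show "t \<in> (\<lambda>u. u * c) ` admissible G"
      using admissible_scaled_iff[OF \<sigma>] by blast
  next
    fix t assume "t \<in> (\<lambda>u. u * c) ` admissible G"
    then obtain u where "u \<in> admissible G" "t = u * c"
      by blast
    moreover have "u * c * ennreal \<sigma> = u"
      by (simp add: mult.assoc mult.commute[of c] c)
    ultimately show "t \<in> admissible (\<lambda>s. G (s * \<sigma>))"
      using admissible_scaled_iff[OF \<sigma>] by simp
  qed
  then show ?thesis
    unfolding radius_def c_def[symmetric]
    using SUP_mult_right_ennreal[of "\<lambda>u. u" "admissible G" c] by simp
qed

lemma inverse_radius_scaled: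
  assumes "0 \<le> \<sigma>" and "G 0"
  shows "inverse (radius (\<lambda>s. G (s * \<sigma>))) = emult (inverse (radius G)) (ennreal \<sigma>)"
proof (cases "\<sigma> = 0")
  case True
  then have "radius (\<lambda>s. G (s * \<sigma>)) = top"
    using assms(2) by (simp add: radius_def admissible_def)
  then show ?thesis
    using True by (simp add: emult_def)
next
  case False
  then have "0 < \<sigma>"
    using assms(1) by simp
  then show ?thesis
    by (simp add: radius_scaled emult_def ennreal_inverse_mult' inverse_ennreal)
qed

lemma kron_upper_in_iff:
  assumes vs: "vector_space sc" and nc: "nc_set D" and P2: "P2 sc D" and P3: "P3 D"
    and n: "1 \<le> n" and m: "1 \<le> m" and k: "1 \<le> k"
    and U: "unitary k U" and W: "unitary k W"
    and diag: "mat_mul k (mat_mul k (mat_adjoint U) Z) W = diag_mat k (\<lambda>i. of_real (\<sigma> i))"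
  shows "upper (k * n) (k * m) (kron_id k n a) (\<lambda>p q. sc (of_real s) (kron sc k n m Z b p q))
      (kron_id k m c) \<in> D (k * n + k * m)
    \<longleftrightarrow> (\<forall>i<k. upper n m a (\<lambda>p q. sc (of_real (s * \<sigma> i)) (b p q)) c \<in> D (n + m))"
proof -
  let ?X = "upper (k * n) (k * m) (kron_id k n a) (\<lambda>p q. sc (of_real s) (kron sc k n m Z b p q))
    (kron_id k m c)"
  let ?B = "\<lambda>i. upper n m a (\<lambda>p q. sc (of_real (s * \<sigma> i)) (b p q)) c"
  have "1 \<le> k * n + k * m"
    using n k by (simp add: add_increasing2)
  then have "?X \<in> D (k * n + k * m) \<longleftrightarrow> conj_by sc (k * n + k * m) (regroup k n m U W) ?X \<in> D (k * n + k * m)"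
    using vs P2 unitary_regroup[OF U W]
    by (intro conj_by_unitary_in_iff[symmetric]) (auto simp: upper_def mats_def)
  also have "\<dots> \<longleftrightarrow> block_diag (n + m) k ?B \<in> D (k * (n + m))"
    by (simp add: conj_by_regroup_upper_kron[OF vs U W diag] distrib_left)
  also have "\<dots> \<longleftrightarrow> (\<forall>i<k. ?B i \<in> D (n + m))"
    using nc P3 n k by (intro block_diag_in_iff) (auto simp: upper_def mats_def)
  finally show ?thesis .
qed

lemma ex_max_index:
  fixes f :: "nat \<Rightarrow> 'a::linorder"
  assumes "0 < k"
  obtains i0 where "i0 < k" "\<And>i. i < k \<Longrightarrow> f i \<le> f i0"
proof -
  have "Max (f ` {..<k}) \<in> f ` {..<k}"
    using assms by (intro Max_in) auto
  then obtain i0 where "i0 < k" "f i0 = Max (f ` {..<k})"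
    by auto
  then show ?thesis
    using that by simp
qed

lemma largest_singular_value:
  assumes "0 < k"
  obtains U W \<sigma> i0 where "unitary k U" "unitary k W" "\<And>i. 0 \<le> \<sigma> i"
    "mat_mul k (mat_mul k (mat_adjoint U) Z) W = diag_mat k (\<lambda>i. of_real (\<sigma> i))"
    "i0 < k" "\<And>i. i < k \<Longrightarrow> \<sigma> i \<le> \<sigma> i0" "sqrt (opnorm k (mult_adj k Z)) = \<sigma> i0"
proof -
  define Zk where "Zk = (\<lambda>i j. if i < k \<and> j < k then Z i j else 0)"
  obtain U W \<sigma> where U: "unitary k U" and W: "unitary k W" and \<sigma>: "\<forall>i. 0 \<le> \<sigma> i"
    and diag: "mat_mul k (mat_mul k (mat_adjoint U) Zk) W = diag_mat k (\<lambda>i. of_real (\<sigma> i))"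
    using singular_value_decomposition[of Zk k] by (auto simp: Zk_def mats_def)
  obtain i0 where i0: "i0 < k" "\<And>i. i < k \<Longrightarrow> \<sigma> i \<le> \<sigma> i0"
    using ex_max_index[OF assms] by blast
  have "mat_mul k (mat_mul k (mat_adjoint U) Z) W = mat_mul k (mat_mul k (mat_adjoint U) Zk) W"
    by (simp add: mat_mul_def Zk_def)
  then have diag': "mat_mul k (mat_mul k (mat_adjoint U) Z) W = diag_mat k (\<lambda>i. of_real (\<sigma> i))"
    using diag by simp
  have "sqrt (opnorm k (mult_adj k Z)) = sqrt (opnorm k (mult_adj k Zk))"
    by (intro arg_cong[where f = sqrt] opnorm_cong) (simp add: mult_adj_def Zk_def)
  also have "\<dots> = \<sigma> i0"
    using \<sigma> i0 by (intro sqrt_opnorm_mult_adj[OF _ U W diag]) (auto simp: Zk_def mats_def)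
  finally show ?thesis
    using \<sigma> by (intro that[OF U W _ diag' i0]) auto
qed

theorem lemma3p4:
  fixes sc :: "complex \<Rightarrow> 'v::{ab_group_add,topological_space} \<Rightarrow> 'v"
    and D :: "nat \<Rightarrow> (nat \<Rightarrow> nat \<Rightarrow> 'v) set"
    and Z :: "nat \<Rightarrow> nat \<Rightarrow> complex"
  assumes "ctvs sc"
    and "nc_set D" and "P2 sc D" and "P3 D"
    and "1 \<le> n" and "1 \<le> m" and "1 \<le> k"
    and "a \<in> D n" and "c \<in> D m" and "b \<in> mats n m"
  shows "delta sc D (k * n) (k * m) (kron_id k n a) (kron_id k m c) (kron sc k n m Z b)
       = emult (delta sc D n m a c b) (ennreal (sqrt (opnorm k (mult_adj k Z))))"
proof -
  have vs: "vector_space sc"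
    using assms(1) by (simp add: ctvs_def)
  have "0 < k"
    using assms(7) by simp
  obtain U W \<sigma> i0 where U: "unitary k U" and W: "unitary k W" and \<sigma>: "\<And>i. 0 \<le> \<sigma> i"
    and diag: "mat_mul k (mat_mul k (mat_adjoint U) Z) W = diag_mat k (\<lambda>i. of_real (\<sigma> i))"
    and i0: "i0 < k" "\<And>i. i < k \<Longrightarrow> \<sigma> i \<le> \<sigma> i0"
    and opnorm: "sqrt (opnorm k (mult_adj k Z)) = \<sigma> i0"
    using largest_singular_value[OF \<open>0 < k\<close>] by blast
  define G where "G s \<longleftrightarrow> upper n m a (\<lambda>i j. sc (of_real s) (b i j)) c \<in> D (n + m)" for s
  have "G 0"
    using upper_scale_zero_in[OF vs assms(2,5,6,8,9)] by (simp add: G_def)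
  have "delta sc D (k * n) (k * m) (kron_id k n a) (kron_id k m c) (kron sc k n m Z b)
      = inverse (radius (\<lambda>s. \<forall>i\<in>{..<k}. G (s * \<sigma> i)))"
    using kron_upper_in_iff[OF vs assms(2-7) U W diag]
    by (simp add: delta_eq_inverse_radius G_def Ball_def)
  also have "\<dots> = inverse (radius (\<lambda>s. G (s * \<sigma> i0)))"
    using \<sigma> i0 unfolding radius_def by (subst admissible_scaled_eq_max) auto
  also have "\<dots> = emult (inverse (radius G)) (ennreal (\<sigma> i0))"
    using \<sigma> \<open>G 0\<close> by (intro inverse_radius_scaled)
  also have "\<dots> = emult (delta sc D n m a c b) (ennreal (sqrt (opnorm k (mult_adj k Z))))"
    by (simp add: opnorm delta_eq_inverse_radius G_def[abs_def])
  finally show ?thesis .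
qed

end
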